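(* Let $\gamma:S^1\to M^1$, $u\mapsto(z(u),\zeta(u))$, be a symmetric circle. Then $\Lambda_\gamma^n$ is a positive Lagrangian if and only if both of the following hold: (a) for all $u\neq0,\pi$, $\ \frac{z'(u)(z(u))^{n-1}}{f'(\zeta(u))}=\frac{\zeta'(u)(z(u))^{n-2}}{2}\notin i\mathbb{R}$; (b) for $u=0,\pi$, $\ \frac{(z'(u))^n}{f'(\zeta(u))}\notin i\mathbb{R}$.
   Context: Fix a positive integer $n$ and a complex polynomial $f$ in one variable all of whose zeros are simple. For $k\ge1$, $M^k=\{(z_1,\ldots,z_k,\zeta)\in\mathbb{C}^{k+1}\mid z_1^2+\cdots+z_k^2=f(\zeta)\}$ with the Kähler structure induced from $\mathbb{C}^{k+1}$; on $M^n$ let $\Omega=\frac{1}{f'(\zeta)}dz_1\wedge\cdots\wedge dz_n$, a nowhere vanishing holomorphic $(n,0)$-form. A Lagrangian $\Lambda\subset M^n$ is positive if $\mathrm{Re}\,\Omega|_\Lambda$ vanishes nowhere. $S^1=\mathbb{R}/2\pi\mathbb{Z}$. A symmetric circle is a smooth embedding $\gamma:S^1\to M^1$, $u\mapsto(z(u),\zeta(u))$, with $(z(-u),\zeta(-u))=(-z(u),\zeta(u))$ for all $u$ and $z(u)\neq0$ for $u\neq0,\pi$. For such $\gamma$, $\Lambda_\gamma^n=\{(z(u)x,\zeta(u))\mid u\in S^1,x\in S^{n-1}\}\subset M^n$, which is a Lagrangian submanifold diffeomorphic to $S^n$. *)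

theory Defs
  imports "HOL-Analysis.Analysis" "HOL-Computational_Algebra.Polynomial"
begin

definition simple_zeros :: "complex poly \<Rightarrow> bool" where
  "simple_zeros f \<longleftrightarrow> (\<forall>x. poly f x = 0 \<longrightarrow> poly (pderiv f) x \<noteq> 0)"

text \<open>Points of C^(n+1) are pairs (z, zeta) with z in C^n (n = CARD('n)).
  M^n = { z_1^2 + ... + z_n^2 = f(zeta) }.\<close>
definition Mspace :: "complex poly \<Rightarrow> ((complex^'n) \<times> complex) set" where
  "Mspace f = {(z, w). (\<Sum>i\<in>UNIV. (z $ i)^2) = poly f w}"

definition vderiv :: "(real \<Rightarrow> complex) \<Rightarrow> (real \<Rightarrow> complex)" where
  "vderiv g = (\<lambda>t. vector_derivative g (at t))"

definition smooth_curve :: "(real \<Rightarrow> complex) \<Rightarrow> bool" where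
  "smooth_curve g \<longleftrightarrow> (\<forall>k t. ((vderiv ^^ k) g) differentiable (at t))"

text \<open>A symmetric circle gamma(u) = (z(u), zeta(u)), parametrised by 2pi-periodic
  functions on the real line (S^1 = R / 2 pi Z): a smooth embedding S^1 -> M^1
  (smooth, injective modulo 2 pi, immersive) with the symmetry and nonvanishing condition.\<close>
definition symmetric_circle :: "complex poly \<Rightarrow> (real \<Rightarrow> complex) \<Rightarrow> (real \<Rightarrow> complex) \<Rightarrow> bool" where
  "symmetric_circle f z \<zeta> \<longleftrightarrow>
     (\<forall>u. z (u + 2*pi) = z u \<and> \<zeta> (u + 2*pi) = \<zeta> u) \<and>
     smooth_curve z \<and> smooth_curve \<zeta> \<and>
     (\<forall>u. (z u)^2 = poly f (\<zeta> u)) \<and>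
     (\<forall>u v. z u = z v \<and> \<zeta> u = \<zeta> v \<longrightarrow> (\<exists>k::int. u - v = 2*pi* of_int k)) \<and>
     (\<forall>u. vderiv z u \<noteq> 0 \<or> vderiv \<zeta> u \<noteq> 0) \<and>
     (\<forall>u. z (-u) = - z u \<and> \<zeta> (-u) = \<zeta> u) \<and>
     (\<forall>u. (\<forall>k::int. u \<noteq> pi * of_int k) \<longrightarrow> z u \<noteq> 0)"

definition Lambda :: "(real \<Rightarrow> complex) \<Rightarrow> (real \<Rightarrow> complex) \<Rightarrow> ((complex^'n) \<times> complex) set" where
  "Lambda z \<zeta> = {((\<chi> i. z u * complex_of_real (x $ i)), \<zeta> u) | u x. (x :: real^'n) \<in> sphere 0 1}"

text \<open>Tangent vectors of a subset L at p: velocities at 0 of curves in L through p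
  (for an embedded submanifold this is the usual tangent space).\<close>
definition tangent_vectors :: "('a::real_normed_vector) set \<Rightarrow> 'a \<Rightarrow> 'a set" where
  "tangent_vectors L p = {v. \<exists>c. c 0 = p \<and> (\<forall>t. c t \<in> L) \<and> (c has_vector_derivative v) (at 0)}"

text \<open>Kaehler form omega = (i/2) sum dz_k /\ d(conj z_k) on C^(n+1).\<close>
definition kahler_form :: "((complex^'n) \<times> complex) \<Rightarrow> ((complex^'n) \<times> complex) \<Rightarrow> real" where
  "kahler_form v w = (\<Sum>k\<in>UNIV. Im (cnj (fst v $ k) * fst w $ k)) + Im (cnj (snd v) * snd w)"

text \<open>The holomorphic volume form Omega = dz_1 /\ ... /\ dz_n / f'(zeta) on M^n,
  evaluated at p on vectors v_j (j ranging over the index type 'n).  Where f'(zeta) = 0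
  we use its holomorphic extension: on tangent vectors it equals
  (-1)^(n-k)/(2 z_k) dz_1 /\ ..^k.. /\ dz_n /\ dzeta for z_k <> 0, which is the determinant
  of the z-matrix with row k replaced by the zeta-components, divided by 2 z_k.\<close>
definition Omega :: "complex poly \<Rightarrow> ((complex^'n) \<times> complex) \<Rightarrow> ('n \<Rightarrow> (complex^'n) \<times> complex) \<Rightarrow> complex" where
  "Omega f p v =
     (if poly (pderiv f) (snd p) \<noteq> 0
      then det (\<chi> i j. fst (v j) $ i) / poly (pderiv f) (snd p)
      else (let k = (SOME k. fst p $ k \<noteq> 0) in
            det (\<chi> i j. if i = k then snd (v j) else fst (v j) $ i) / (2 * fst p $ k)))"

definition lagrangian_isotropic :: "((complex^'n) \<times> complex) set \<Rightarrow> bool" where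
  "lagrangian_isotropic L \<longleftrightarrow>
     (\<forall>p\<in>L. \<forall>v\<in>tangent_vectors L p. \<forall>w\<in>tangent_vectors L p. kahler_form v w = 0)"

definition positive :: "complex poly \<Rightarrow> ((complex^'n) \<times> complex) set \<Rightarrow> bool" where
  "positive f L \<longleftrightarrow>
     (\<forall>p\<in>L. \<exists>v. (\<forall>j. v j \<in> tangent_vectors L p) \<and> Re (Omega f p v) \<noteq> 0)"

definition positive_lagrangian :: "complex poly \<Rightarrow> ((complex^'n) \<times> complex) set \<Rightarrow> bool" where
  "positive_lagrangian f L \<longleftrightarrow> lagrangian_isotropic L \<and> positive f L"

end

theory Submission
  imports Defs
begin

text \<open>Every point of \<open>\<Lambda>\<close> is \<open>(z(u) x, \<zeta>(u))\<close> with \<open>u \<in> [0, \<pi>]\<close> and \<open>|x| = 1\<close>. A velocity of \<open>\<Lambda>\<close>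
  there must keep \<open>z\<^sup>2 = f(\<zeta>)\<close> and keep all products \<open>z\<^sub>i cnj z\<^sub>j\<close> real; where \<open>z(u) \<noteq> 0\<close> this pins
  the tangent space down to the real span of \<open>(z' x, \<zeta>')\<close> and the \<open>(z(u) y, 0)\<close> with \<open>y \<bottom> x\<close>, and
  where \<open>z(u) = 0\<close> (i.e. \<open>u = 0, \<pi>\<close>, where \<open>f'(\<zeta>) \<noteq> 0\<close> and \<open>\<zeta>' = 0\<close>) to \<open>z'(u) \<real>\<^sup>n\<close>. On such
  frames \<open>\<Omega>\<close> is a real multiple, nonzero for a suitable frame, of \<open>z' z\<^sup>n\<^sup>-\<^sup>1/f' = \<zeta>' z\<^sup>n\<^sup>-\<^sup>2/2\<close>
  resp. of \<open>z'\<^sup>n/f'\<close>, so \<open>Re \<Omega>\<close> can be made nonzero exactly when these are not imaginary. The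
  same description of the tangent spaces shows that \<open>\<omega>\<close> vanishes on \<open>\<Lambda>\<close>. The delicate point is
  that a curve in \<open>\<Lambda>\<close> need not lift to a differentiable curve in \<open>(u, x)\<close>; only continuity of
  the \<open>u\<close>-component is available, and it suffices.\<close>

section \<open>Curves and their velocities\<close>

lemma vderiv_has_vector_derivative:
  assumes "smooth_curve g"
  shows "(g has_vector_derivative vderiv g t) (at t)"
proof -
  have "((vderiv ^^ 0) g) differentiable (at t)"
    using assms unfolding smooth_curve_def by blast
  then show ?thesis by (simp add: vderiv_def vector_derivative_works[symmetric])
qed

lemma vderiv_periodic:
  assumes "\<And>u. g (u + c) = g u" and "smooth_curve g"
  shows "vderiv g (u + c) = vderiv g u"
proof -
  have "((g \<circ> (\<lambda>t. t + c)) has_vector_derivative (1 *\<^sub>R vderiv g (u + c))) (at u)"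
    by (rule vector_diff_chain_at)
       (auto intro!: derivative_eq_intros vderiv_has_vector_derivative[OF assms(2)])
  moreover have "g \<circ> (\<lambda>t. t + c) = g" using assms(1) by (auto simp: o_def)
  ultimately show ?thesis
    using vderiv_has_vector_derivative[OF assms(2), of u] vector_derivative_unique_at by fastforce
qed

lemma vderiv_reflect:
  assumes "\<And>u. g (- u) = s * g u" and "smooth_curve g"
  shows "- vderiv g (- u) = s * vderiv g u"
proof -
  have "((g \<circ> uminus) has_vector_derivative ((-1) *\<^sub>R vderiv g (- u))) (at u)"
    by (rule vector_diff_chain_at)
       (auto intro!: derivative_eq_intros vderiv_has_vector_derivative[OF assms(2)])
  moreover have "g \<circ> uminus = (\<lambda>t. s * g t)" using assms(1) by (auto simp: o_def)
  moreover have "((\<lambda>t. s * g t) has_vector_derivative s * vderiv g u) (at u)"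
    by (auto intro!: derivative_eq_intros vderiv_has_vector_derivative[OF assms(2)])
  ultimately show ?thesis using vector_derivative_unique_at by fastforce
qed

lemma periodic_add_int_multiple:
  fixes c :: real
  assumes "\<And>u. g (u + c) = g u"
  shows "g (u + c * of_int k) = g u"
proof -
  have nat: "g (u + c * real m) = g u" for u m
  proof (induction m arbitrary: u)
    case (Suc m)
    have "g (u + c * real (Suc m)) = g ((u + c * real m) + c)" by (simp add: algebra_simps)
    then show ?case using assms Suc by simp
  qed simp
  show ?thesis
  proof (cases "k \<ge> 0")
    case True
    then show ?thesis using nat[of u "nat k"] by simp
  next
    case False
    then show ?thesis using nat[of "u + c * of_int k" "nat (- k)"] by simp
  qed
qed

lemma has_vector_derivative_difference_quotient:
  fixes c :: "real \<Rightarrow> 'a::real_normed_vector"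
  assumes "(c has_vector_derivative v) (at x)"
  shows "((\<lambda>t. (c t - c x) /\<^sub>R (t - x)) \<longlongrightarrow> v) (at x)"
proof -
  have "((\<lambda>y. ((c y - c x) - (y - x) *\<^sub>R v) /\<^sub>R norm (y - x)) \<longlongrightarrow> 0) (at x)"
    using assms by (simp add: has_vector_derivative_def has_derivative_at_within)
  then have "((\<lambda>y. norm (((c y - c x) - (y - x) *\<^sub>R v) /\<^sub>R norm (y - x))) \<longlongrightarrow> 0) (at x)"
    by (rule tendsto_norm_zero)
  moreover have "\<forall>\<^sub>F y in at x. norm (((c y - c x) - (y - x) *\<^sub>R v) /\<^sub>R norm (y - x))
      = norm ((c y - c x) /\<^sub>R (y - x) - v)"
    unfolding eventually_at_filter
  proof (rule always_eventually, intro allI impI)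
    fix y :: real
    assume "y \<noteq> x"
    then have "(c y - c x) /\<^sub>R (y - x) - v = inverse (y - x) *\<^sub>R ((c y - c x) - (y - x) *\<^sub>R v)"
      by (simp add: scaleR_diff_right)
    then show "norm (((c y - c x) - (y - x) *\<^sub>R v) /\<^sub>R norm (y - x)) = norm ((c y - c x) /\<^sub>R (y - x) - v)"
      by (simp add: abs_inverse divide_inverse)
  qed
  ultimately have "((\<lambda>y. norm ((c y - c x) /\<^sub>R (y - x) - v)) \<longlongrightarrow> 0) (at x)"
    using tendsto_cong by fastforce
  then show ?thesis by (rule LIM_zero_cancel[OF tendsto_norm_zero_cancel])
qed

lemma has_vector_derivative_Caratheodory:
  fixes g :: "real \<Rightarrow> 'a::real_normed_vector"
  assumes "(g has_vector_derivative D) (at u)"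
  obtains Q where "isCont Q u" "Q u = D" "\<And>s. g s - g u = (s - u) *\<^sub>R Q s"
proof
  define Q where "Q s = (if s = u then D else (g s - g u) /\<^sub>R (s - u))" for s
  have "\<forall>\<^sub>F s in at u. (g s - g u) /\<^sub>R (s - u) = Q s"
    by (auto simp: Q_def eventually_at_filter)
  then have "(Q \<longlongrightarrow> D) (at u)"
    using tendsto_cong has_vector_derivative_difference_quotient[OF assms] by fastforce
  then show "isCont Q u" by (simp add: isCont_def Q_def)
  show "Q u = D" "g s - g u = (s - u) *\<^sub>R Q s" for s by (simp_all add: Q_def)
qed

lemma tendsto_real_multiple:
  fixes q :: "'b \<Rightarrow> complex" and r :: "'b \<Rightarrow> real"
  assumes "F \<noteq> bot" and L: "((\<lambda>t. of_real (r t) * q t) \<longlongrightarrow> L) F"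
    and q: "(q \<longlongrightarrow> D) F" and "D \<noteq> 0"
  obtains a where "L = of_real a * D"
proof
  have "\<forall>\<^sub>F t in F. q t \<noteq> 0" using tendsto_imp_eventually_ne[OF q \<open>D \<noteq> 0\<close>] .
  then have "\<forall>\<^sub>F t in F. of_real (r t) * q t / q t = complex_of_real (r t)"
    by eventually_elim simp
  moreover have "((\<lambda>t. of_real (r t) * q t / q t) \<longlongrightarrow> L / D) F"
    by (rule tendsto_divide[OF L q \<open>D \<noteq> 0\<close>])
  ultimately have lim: "((\<lambda>t. complex_of_real (r t)) \<longlongrightarrow> L / D) F"
    using tendsto_cong by fastforce
  then have "((\<lambda>t. complex_of_real (r t)) \<longlongrightarrow> of_real (Re (L / D))) F"
    using tendsto_Re[OF lim] by (simp add: tendsto_of_real)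
  then have "L / D = of_real (Re (L / D))" using lim \<open>F \<noteq> bot\<close> tendsto_unique by blast
  then show "L = of_real (Re (L / D)) * D" using \<open>D \<noteq> 0\<close> by (simp add: field_simps)
qed

lemma has_vector_derivative_shift:
  assumes "(g has_vector_derivative D) (at u)"
  shows "((\<lambda>t. g (u + t)) has_vector_derivative D) (at 0)"
proof -
  have "((\<lambda>t. u + t) has_vector_derivative 1) (at 0)" by (auto intro!: derivative_eq_intros)
  moreover have "(g has_vector_derivative D) (at ((\<lambda>t. u + t) 0))" using assms by simp
  ultimately have "((g \<circ> (\<lambda>t. u + t)) has_vector_derivative 1 *\<^sub>R D) (at 0)"
    by (rule vector_diff_chain_at)
  then show ?thesis by (simp add: o_def)
qed

lemma has_vector_derivative_components:
  fixes c :: "real \<Rightarrow> ('a::real_normed_vector^'n) \<times> 'b::real_normed_vector"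
  assumes "(c has_vector_derivative v) (at t)"
  shows "((\<lambda>t. fst (c t) $ i) has_vector_derivative (fst v $ i)) (at t)"
    and "((\<lambda>t. snd (c t)) has_vector_derivative (snd v)) (at t)"
  using bounded_linear.has_vector_derivative[OF
      bounded_linear_compose[OF bounded_linear_vec_nth bounded_linear_fst] assms]
    bounded_linear.has_vector_derivative[OF bounded_linear_snd assms] by auto

section \<open>Linear algebra around a unit vector\<close>

lemma sphere_iff_sum_squares: "(x::real^'n) \<in> sphere 0 1 \<longleftrightarrow> (\<Sum>i\<in>UNIV. (x$i)^2) = 1"
proof -
  have "norm x = sqrt (\<Sum>i\<in>UNIV. (x$i)^2)"
    by (simp add: norm_eq_sqrt_inner inner_vec_def power2_eq_square)
  then show ?thesis by simp
qed

lemma axis_in_unit_sphere: "axis i 1 \<in> sphere (0::real^'n) 1"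
  by simp

lemma sphere_has_nonzero_component:
  assumes "(x::real^'n) \<in> sphere 0 1"
  obtains k where "x$k \<noteq> 0"
proof -
  have "\<not> (\<forall>k. x$k = 0)"
  proof
    assume "\<forall>k. x$k = 0"
    then have "(\<Sum>i\<in>UNIV. (x$i)^2) = 0" by simp
    with assms show False unfolding sphere_iff_sum_squares by simp
  qed
  then show ?thesis using that by blast
qed

lemma great_circle_in_sphere:
  fixes x e :: "real^'n"
  assumes "x \<in> sphere 0 1" and "e \<in> sphere 0 1" and "(\<Sum>i\<in>UNIV. x$i * e$i) = 0"
  shows "cos t *\<^sub>R x + sin t *\<^sub>R e \<in> sphere 0 1"
proof -
  have "(\<Sum>i\<in>UNIV. ((cos t *\<^sub>R x + sin t *\<^sub>R e) $ i)^2)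
    = (cos t)^2 * (\<Sum>i\<in>UNIV. (x$i)^2) + (sin t)^2 * (\<Sum>i\<in>UNIV. (e$i)^2)
      + 2 * cos t * sin t * (\<Sum>i\<in>UNIV. x$i * e$i)"
    by (simp add: power2_eq_square sum.distrib sum_distrib_left algebra_simps)
  also have "\<dots> = 1" using assms unfolding sphere_iff_sum_squares by simp
  finally show ?thesis unfolding sphere_iff_sum_squares .
qed

text \<open>Hypothesis \<open>I\<close> says that \<open>v\<close> is the velocity of a curve through \<open>w = z\<^sub>0 x\<close> keeping all
  \<open>w\<^sub>i cnj w\<^sub>j\<close> real; the coefficient of \<open>x\<close> is then read off from \<open>\<Sum> x\<^sub>i v\<^sub>i\<close>.\<close>
lemma decompose_along_unit_vector:
  fixes x :: "real^'n" and v :: "complex^'n"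
  assumes x: "x \<in> sphere 0 1" and "z0 \<noteq> 0"
    and S: "(\<Sum>i\<in>UNIV. of_real (x$i) * v$i) = c"
    and I: "\<And>i j. Im (z0 * of_real (x$i) * cnj (v$j) + v$i * cnj (z0 * of_real (x$j))) = 0"
  obtains y :: "real^'n" where "(\<Sum>i\<in>UNIV. x$i * y$i) = 0"
    and "\<And>i. v$i = c * of_real (x$i) + z0 * of_real (y$i)"
proof
  have x2: "(\<Sum>i\<in>UNIV. (x$i)^2) = 1" using x sphere_iff_sum_squares by blast
  define b where "b i = Im (v$i * cnj z0)" for i
  have b_sym: "x$j * b i = x$i * b j" for i j
    using I[of i j] unfolding b_def by (simp add: algebra_simps)
  have "Im ((v$i - c * of_real (x$i)) * cnj z0) = 0" for i
  proof -
    have "(\<Sum>j\<in>UNIV. x$j * (x$j * b i)) = (\<Sum>j\<in>UNIV. (x$j)^2) * b i"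
      by (simp add: sum_distrib_right power2_eq_square mult.assoc)
    then have "b i = (\<Sum>j\<in>UNIV. x$j * (x$j * b i))" using x2 by simp
    also have "\<dots> = (\<Sum>j\<in>UNIV. x$i * (x$j * b j))"
      by (rule sum.cong[OF refl]) (metis b_sym mult.left_commute)
    also have "\<dots> = x$i * Im (c * cnj z0)"
      by (simp add: sum_distrib_left b_def Im_sum sum_distrib_right algebra_simps flip: S)
    finally show ?thesis unfolding b_def by (simp add: algebra_simps)
  qed
  then have real: "(v$i - c * of_real (x$i)) / z0 = of_real (Re ((v$i - c * of_real (x$i)) / z0))" for i
    by (simp add: complex_div_cnj[of _ z0] Im_divide_of_real complex_eq_iff)
  define y where "y = (\<chi> i. Re ((v$i - c * of_real (x$i)) / z0))"
  show "v$i = c * of_real (x$i) + z0 * of_real (y$i)" for i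
    using real[of i] \<open>z0 \<noteq> 0\<close> by (simp add: y_def field_simps)
  have "(\<Sum>i\<in>UNIV. of_real (x$i) * ((v$i - c * of_real (x$i)) / z0))
      = (\<Sum>i\<in>UNIV. of_real (x$i) * v$i - c * of_real ((x$i)^2)) / z0"
    by (simp add: sum_divide_distrib algebra_simps power2_eq_square)
  also have "\<dots> = ((\<Sum>i\<in>UNIV. of_real (x$i) * v$i) - c * of_real (\<Sum>i\<in>UNIV. (x$i)^2)) / z0"
    by (simp add: sum_subtractf sum_distrib_left)
  also have "\<dots> = 0" using S x2 by simp
  finally have "(\<Sum>i\<in>UNIV. Re (of_real (x$i) * ((v$i - c * of_real (x$i)) / z0))) = 0"
    by (simp only: Re_sum[symmetric]) simp
  then show "(\<Sum>i\<in>UNIV. x$i * y$i) = 0" by (simp add: y_def del: times_divide_eq_right)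
qed

lemma det_of_real:
  fixes A :: "real^'n^'n"
  shows "det (\<chi> i j. complex_of_real (A$i$j)) = complex_of_real (det A)"
  unfolding det_def by (simp add: of_real_sum of_real_mult of_real_prod)

lemma det_scaled_rows_of_real:
  fixes R :: "real^'n^'n" and s :: "'n \<Rightarrow> complex"
  shows "det (\<chi> i j. s i * complex_of_real (R$i$j)) = prod s UNIV * of_real (det R)"
proof -
  have "(\<chi> i j. s i * complex_of_real (R$i$j)) = (\<chi> i. s i *s (\<chi> j. complex_of_real (R$i$j)))"
    by (simp add: vec_eq_iff)
  then show ?thesis
    using det_rows_mul[of s "\<lambda>i. \<chi> j. complex_of_real (R$i$j)"] det_of_real[of R] by simp
qed

lemma det_scaled_of_real:
  fixes R :: "real^'n^'n" and c :: complex
  shows "det (\<chi> i j. c * complex_of_real (R$i$j)) = c ^ CARD('n) * of_real (det R)"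
  using det_scaled_rows_of_real[of "\<lambda>_. c" R] by simp

lemma prod_if_eq_const:
  fixes a b :: "'a::comm_monoid_mult"
  shows "(\<Prod>i\<in>(UNIV::'n::finite set). if i = k then a else b) = a * b ^ (CARD('n) - 1)"
proof -
  have "(\<Prod>i\<in>UNIV. if i = k then a else b) = a * (\<Prod>i\<in>UNIV - {k}. if i = k then a else b)"
    by (subst prod.remove[of _ k]) auto
  also have "(\<Prod>i\<in>UNIV - {k}. if i = k then a else b) = b ^ (CARD('n) - 1)"
    by (simp add: card_Diff_singleton)
  finally show ?thesis .
qed

text \<open>For \<open>x\<^sub>k \<noteq> 0\<close>: the matrix with column \<open>k\<close> equal to \<open>x\<close> and column \<open>j \<noteq> k\<close> equal to
  \<open>e\<^sub>j - (x\<^sub>j / x\<^sub>k) e\<^sub>k\<close>, a basis of \<open>\<real>\<^sup>n\<close> adapted to \<open>x\<close> and \<open>x\<^sup>\<bottom>\<close>.\<close>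
definition unit_frame :: "real^'n \<Rightarrow> 'n \<Rightarrow> real^'n^'n" where
  "unit_frame x k = (\<chi> i j. if j = k then x$i
     else (if i = j then 1 else 0) - (if i = k then x$j / x$k else 0))"

lemma unit_frame_column_orthogonal:
  assumes "x$k \<noteq> 0" and "j \<noteq> k"
  shows "(\<Sum>i\<in>UNIV. x$i * unit_frame x k $ i $ j) = 0"
proof -
  have "(\<Sum>i\<in>UNIV. x$i * unit_frame x k $ i $ j)
      = (\<Sum>i\<in>UNIV. (if i = j then x$i else 0) - (if i = k then x$i * (x$j / x$k) else 0))"
    using assms by (intro sum.cong) (auto simp: unit_frame_def)
  then show ?thesis using assms by (simp add: sum_subtractf)
qed

lemma unit_frame_transpose_mult:
  assumes "x$k \<noteq> 0" and "x \<in> sphere 0 1"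
  shows "(\<Sum>m\<in>UNIV. x$m * unit_frame x k $ m $ i) = (if i = k then 1 else 0)"
proof (cases "i = k")
  case True
  then show ?thesis
    using assms(2)[unfolded sphere_iff_sum_squares] by (simp add: unit_frame_def power2_eq_square)
next
  case False
  then show ?thesis using unit_frame_column_orthogonal[OF assms(1) False] by simp
qed

lemma det_unit_frame_nonzero:
  assumes xk: "x$k \<noteq> 0" and x: "x \<in> sphere 0 1"
  shows "det (unit_frame x k) \<noteq> 0"
proof -
  let ?N = "unit_frame x k"
  have "w = 0" if N0: "?N *v w = 0" for w
  proof -
    have comp: "(?N *v w) $ i = x$i * w$k + w$i" if "i \<noteq> k" for i
    proof -
      have "(?N *v w) $ i = ?N $ i $ k * w$k + (\<Sum>j\<in>UNIV - {k}. ?N $ i $ j * w$j)"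
        by (simp add: matrix_vector_mult_def sum.remove[of _ k])
      also have "(\<Sum>j\<in>UNIV - {k}. ?N $ i $ j * w$j) = (\<Sum>j\<in>UNIV - {k}. if j = i then w$j else 0)"
        using that by (intro sum.cong) (auto simp: unit_frame_def)
      finally show ?thesis using that by (simp add: unit_frame_def)
    qed
    \<comment> \<open>pairing with \<open>x\<close> isolates the coordinate \<open>w\<^sub>k\<close>\<close>
    have "0 = (\<Sum>i\<in>UNIV. x$i * (?N *v w) $ i)" using N0 by simp
    also have "\<dots> = (\<Sum>j\<in>UNIV. (\<Sum>i\<in>UNIV. x$i * ?N $ i $ j) * w$j)"
      by (simp add: matrix_vector_mult_def sum_distrib_left sum_distrib_right algebra_simps)
        (rule sum.swap)
    also have "\<dots> = (\<Sum>j\<in>UNIV. if j = k then w$j else 0)"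
      by (rule sum.cong) (simp_all add: unit_frame_transpose_mult[OF xk x])
    also have "\<dots> = w$k" by simp
    finally have wk: "w$k = 0" ..
    show "w = 0"
      unfolding vec_eq_iff using comp N0 wk by (metis add_0 mult_zero_right zero_index)
  qed
  then have "inj ((*v) ?N)"
    by (intro injI) (metis matrix_vector_mult_diff_distrib right_minus_eq)
  then have "invertible ?N"
    by (simp add: invertible_left_inverse matrix_left_invertible_injective)
  then show ?thesis by (simp add: invertible_det_nz)
qed

text \<open>Columns \<open>a\<^sub>j z\<^sub>p x + z\<^sub>z Y\<^sub>j\<close> with real \<open>a\<^sub>j\<close> and \<open>Y\<^sub>j \<bottom> x\<close>: in the frame adapted to \<open>x\<close> the first
  coordinate carries the factor \<open>z\<^sub>p\<close> and the remaining \<open>n - 1\<close> carry \<open>z\<^sub>z\<close>.\<close>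
lemma det_columns_along_unit_vector:
  fixes x :: "real^'n" and a :: "'n \<Rightarrow> real" and Y :: "'n \<Rightarrow> real^'n" and zp zz :: complex
  assumes x: "x \<in> sphere 0 1" and orth: "\<And>j. (\<Sum>i\<in>UNIV. x$i * Y j $ i) = 0"
  obtains r where "det (\<chi> i j. of_real (a j) * zp * of_real (x$i) + zz * of_real (Y j $ i))
    = zp * zz ^ (CARD('n) - 1) * of_real r"
proof -
  obtain k where xk: "x$k \<noteq> 0" using sphere_has_nonzero_component[OF x] .
  define N where "N = unit_frame x k"
  define M where "M = (\<chi> i j. of_real (a j) * zp * of_real (x$i) + zz * of_real (Y j $ i))"
  define R where "R = (\<chi> i l. if i = k then a l else (\<Sum>m\<in>UNIV. N$m$i * Y l $ m))"
  have "(transpose (\<chi> i j. complex_of_real (N$i$j)) ** M) $ i $ l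
      = (if i = k then zp else zz) * of_real (R$i$l)" for i l
  proof -
    have "(transpose (\<chi> i j. complex_of_real (N$i$j)) ** M) $ i $ l
        = of_real (a l) * zp * of_real (\<Sum>m\<in>UNIV. x$m * N$m$i)
          + zz * of_real (\<Sum>m\<in>UNIV. N$m$i * Y l $ m)"
      by (simp add: matrix_matrix_mult_def transpose_def M_def sum.distrib sum_distrib_left
          algebra_simps)
    moreover have "(\<Sum>m\<in>UNIV. complex_of_real (N$m$k) * of_real (Y l $ m)) = 0"
      using orth[of l] unfolding of_real_mult[symmetric] of_real_sum[symmetric]
      by (simp add: N_def unit_frame_def mult.commute)
    ultimately show ?thesis
      using unit_frame_transpose_mult[OF xk x, of i] by (simp add: R_def N_def)
  qed
  then have "transpose (\<chi> i j. complex_of_real (N$i$j)) ** M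
      = (\<chi> i l. (if i = k then zp else zz) * complex_of_real (R$i$l))"
    by (simp add: vec_eq_iff)
  then have "of_real (det N) * det M = zp * zz ^ (CARD('n) - 1) * of_real (det R)"
    using det_mul[of "transpose (\<chi> i j. complex_of_real (N$i$j))" M]
    by (simp add: det_transpose det_of_real det_scaled_rows_of_real prod_if_eq_const)
  moreover have "det N \<noteq> 0" unfolding N_def by (rule det_unit_frame_nonzero[OF xk x])
  ultimately have "det M = zp * zz ^ (CARD('n) - 1) * of_real (det R / det N)"
    by (simp add: field_simps)
  then show ?thesis using that unfolding M_def by blast
qed

lemma det_unit_frame_scaled:
  fixes x :: "real^'n" and zp z0 :: complex
  shows "det (\<chi> i j. if j = k then zp * of_real (x$i) else z0 * of_real (unit_frame x k $ i $ j))
    = zp * z0 ^ (CARD('n) - 1) * of_real (det (unit_frame x k))"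
proof -
  let ?A = "\<chi> i j. if j = k then zp * of_real (x$i) else z0 * of_real (unit_frame x k $ i $ j)"
  have "transpose ?A
      = (\<chi> i j. (if i = k then zp else z0) * complex_of_real (transpose (unit_frame x k) $ i $ j))"
    by (simp add: vec_eq_iff transpose_def unit_frame_def)
  then have "det (transpose ?A) = zp * z0 ^ (CARD('n) - 1) * of_real (det (transpose (unit_frame x k)))"
    by (simp add: det_scaled_rows_of_real prod_if_eq_const)
  then show ?thesis by (simp add: det_transpose)
qed

lemma kahler_form_regular_tangents:
  fixes x y y' :: "real^'n" and zp z0 zq :: complex
  assumes "(\<Sum>i\<in>UNIV. x$i * y$i) = 0" "(\<Sum>i\<in>UNIV. x$i * y'$i) = 0"
  shows "kahler_form
      (((\<chi> i. of_real a * zp * of_real (x$i) + z0 * of_real (y$i)) :: complex^'n), of_real a * zq)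
      (((\<chi> i. of_real b * zp * of_real (x$i) + z0 * of_real (y'$i)) :: complex^'n), of_real b * zq)
    = 0"
proof -
  have "Im (cnj (of_real a * zp * of_real (x$i) + z0 * of_real (y$i))
          * (of_real b * zp * of_real (x$i) + z0 * of_real (y'$i)))
      = (x$i * y'$i) * (a * Im (cnj zp * z0)) + (x$i * y$i) * (b * Im (cnj z0 * zp))" for i
    by (simp add: algebra_simps)
  then have "(\<Sum>i\<in>UNIV. Im (cnj (of_real a * zp * of_real (x$i) + z0 * of_real (y$i))
          * (of_real b * zp * of_real (x$i) + z0 * of_real (y'$i))))
      = (\<Sum>i\<in>UNIV. x$i * y'$i) * (a * Im (cnj zp * z0)) + (\<Sum>i\<in>UNIV. x$i * y$i) * (b * Im (cnj z0 * zp))"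
    by (simp add: sum.distrib sum_distrib_right)
  then show ?thesis using assms unfolding kahler_form_def by (simp add: algebra_simps)
qed

lemma kahler_form_real_multiples:
  fixes y y' :: "real^'n" and zp :: complex
  shows "kahler_form (((\<chi> i. zp * of_real (y$i)) :: complex^'n), 0)
    (((\<chi> i. zp * of_real (y'$i)) :: complex^'n), 0) = 0"
  unfolding kahler_form_def by (simp add: algebra_simps)

lemma Re_of_real_mult: "Re (complex_of_real r * w) = r * Re w"
  by simp

lemma notin_imaginary_axis_iff: "w \<notin> range (\<lambda>r. \<i> * complex_of_real r) \<longleftrightarrow> Re w \<noteq> 0"
proof
  assume "w \<notin> range (\<lambda>r. \<i> * complex_of_real r)"
  then have "w \<noteq> \<i> * complex_of_real (Im w)" by blast
  then show "Re w \<noteq> 0" by (auto simp: complex_eq_iff)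
qed auto

lemma power_card_minus_one_eq_powi:
  fixes w :: complex
  assumes "w \<noteq> 0"
  shows "w ^ (CARD('n::finite) - 1) = w powi (int CARD('n) - 2) * w"
proof -
  have "w powi (int CARD('n) - 2) * w = w powi (int CARD('n) - 1)"
    using power_int_minus_mult[of w "int CARD('n) - 1"] assms by simp
  also have "\<dots> = w ^ (CARD('n) - 1)"
    using zero_less_card_finite[where 'a='n] by (simp add: of_nat_diff flip: power_int_of_nat)
  finally show ?thesis by simp
qed

section \<open>Curves in \<open>\<Lambda>\<close>\<close>

lemma tangent_vectors_scaleR:
  assumes "v \<in> tangent_vectors L p"
  shows "r *\<^sub>R v \<in> tangent_vectors L p"
proof -
  obtain c where c: "c 0 = p" "\<And>t. c t \<in> L" "(c has_vector_derivative v) (at 0)"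
    using assms unfolding tangent_vectors_def by blast
  have "((\<lambda>t. r * t) has_vector_derivative r) (at 0)"
    using has_vector_derivative_mult_right[OF has_vector_derivative_id, of r] by simp
  moreover have "(c has_vector_derivative v) (at ((\<lambda>t. r * t) 0))" using c(3) by simp
  ultimately have "((c \<circ> (\<lambda>t. r * t)) has_vector_derivative r *\<^sub>R v) (at 0)"
    by (rule vector_diff_chain_at)
  then show ?thesis
    unfolding tangent_vectors_def using c by (intro CollectI exI[of _ "c \<circ> (\<lambda>t. r * t)"]) auto
qed

lemma zero_in_tangent_vectors: "p \<in> L \<Longrightarrow> 0 \<in> tangent_vectors L p"
  unfolding tangent_vectors_def by (intro CollectI exI[of _ "\<lambda>t. p"]) auto

lemma Lambda_memI:
  "x \<in> sphere 0 1 \<Longrightarrow>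
    ((\<chi> i. z u * complex_of_real (x $ i)), \<zeta> u) \<in> (Lambda z \<zeta> :: ((complex^'n) \<times> complex) set)"
  unfolding Lambda_def by blast

lemma tangent_along_circle:
  assumes "(z has_vector_derivative z') (at u)" and "(\<zeta> has_vector_derivative \<zeta>') (at u)"
    and x: "x \<in> sphere 0 1"
  shows "((\<chi> i. z' * of_real (x$i)), \<zeta>') \<in>
    tangent_vectors (Lambda z \<zeta> :: ((complex^'n) \<times> complex) set) ((\<chi> i. z u * of_real (x$i)), \<zeta> u)"
proof -
  define c where "c t = (((\<chi> i. z (u + t) * complex_of_real (x$i)) :: complex^'n), \<zeta> (u + t))" for t
  have "bounded_linear (\<lambda>w::complex. (\<chi> i. w * complex_of_real (x$i)) :: complex^'n)"
    by (rule bounded_linearI') (simp_all add: vec_eq_iff algebra_simps)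
  from bounded_linear.has_vector_derivative[OF this has_vector_derivative_shift[OF assms(1)]]
  have "(c has_vector_derivative ((\<chi> i. z' * of_real (x$i)), \<zeta>')) (at 0)"
    unfolding c_def by (rule has_vector_derivative_Pair[OF _ has_vector_derivative_shift[OF assms(2)]])
  moreover have "c t \<in> Lambda z \<zeta>" for t unfolding c_def by (rule Lambda_memI[OF x])
  moreover have "c 0 = ((\<chi> i. z u * of_real (x$i)), \<zeta> u)" by (simp add: c_def)
  ultimately show ?thesis unfolding tangent_vectors_def by blast
qed

text \<open>The great circle \<open>t \<mapsto> cos t x + sin t y/|y|\<close> in the sphere, scaled by \<open>z(u)\<close>.\<close>
lemma tangent_along_sphere:
  fixes x y :: "real^'n"
  assumes x: "x \<in> sphere 0 1" and orth: "(\<Sum>i\<in>UNIV. x$i * y$i) = 0"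
  shows "((\<chi> i. z u * of_real (y$i)), 0) \<in>
    tangent_vectors (Lambda z \<zeta> :: ((complex^'n) \<times> complex) set) ((\<chi> i. z u * of_real (x$i)), \<zeta> u)"
proof (cases "y = 0")
  case True
  then have "((\<chi> i. z u * of_real (y$i)), 0) = (0 :: (complex^'n) \<times> complex)"
    by (simp add: vec_eq_iff zero_prod_def)
  then show ?thesis using zero_in_tangent_vectors[OF Lambda_memI[OF x]] by simp
next
  case False
  define e where "e = y /\<^sub>R norm y"
  have e: "e \<in> sphere 0 1" using False by (simp add: e_def)
  have "(\<Sum>i\<in>UNIV. x$i * e$i) = inverse (norm y) * (\<Sum>i\<in>UNIV. x$i * y$i)"
    by (simp add: e_def sum_distrib_left algebra_simps)
  then have "(\<Sum>i\<in>UNIV. x$i * e$i) = 0" using orth by simp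
  have circle: "cos t *\<^sub>R x + sin t *\<^sub>R e \<in> sphere 0 1" for t
    by (rule great_circle_in_sphere[OF x e \<open>(\<Sum>i\<in>UNIV. x$i * e$i) = 0\<close>])
  define A where "A = ((\<chi> i. z u * of_real (x$i)) :: complex^'n)"
  define B where "B = ((\<chi> i. z u * of_real (e$i)) :: complex^'n)"
  define c where "c t = (cos t *\<^sub>R A + sin t *\<^sub>R B, \<zeta> u)" for t
  have "((\<lambda>t. cos t *\<^sub>R A + sin t *\<^sub>R B) has_vector_derivative
      ((cos 0 *\<^sub>R 0 + (- sin 0) *\<^sub>R A) + (sin 0 *\<^sub>R 0 + cos 0 *\<^sub>R B))) (at 0)"
    by (intro has_vector_derivative_add has_vector_derivative_scaleR has_vector_derivative_const
        DERIV_sin DERIV_cos)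
  then have "(c has_vector_derivative (B, 0)) (at 0)"
    unfolding c_def by (intro has_vector_derivative_Pair has_vector_derivative_const) simp
  moreover have "c t = ((\<chi> i. z u * of_real ((cos t *\<^sub>R x + sin t *\<^sub>R e) $ i)), \<zeta> u)" for t
    by (simp add: c_def A_def B_def vec_eq_iff scaleR_conv_of_real[where 'a=complex] algebra_simps)
  then have "c t \<in> Lambda z \<zeta>" for t using Lambda_memI[OF circle] by simp
  ultimately have "(B, 0) \<in> tangent_vectors (Lambda z \<zeta>) (c 0)"
    unfolding tangent_vectors_def by blast
  moreover have "norm y *\<^sub>R (B, 0) = ((\<chi> i. z u * of_real (y$i)), 0)"
    using False by (simp add: B_def e_def vec_eq_iff scaleR_Pair scaleR_conv_of_real[where 'a=complex])
  moreover have "c 0 = ((\<chi> i. z u * of_real (x$i)), \<zeta> u)" by (simp add: c_def A_def)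
  ultimately show ?thesis using tangent_vectors_scaleR[of "(B, 0)"] by metis
qed

text \<open>Along \<open>w(t) = g(t) X(t)\<close> with \<open>X\<close> real, all products \<open>w\<^sub>i cnj w\<^sub>j\<close> stay real.\<close>
lemma tangent_products_real:
  fixes c :: "real \<Rightarrow> (complex^'n) \<times> complex" and X :: "real \<Rightarrow> real^'n"
  assumes cD: "(c has_vector_derivative v) (at 0)"
    and cX: "\<And>t. fst (c t) = (\<chi> i. g t * complex_of_real (X t $ i))"
  shows "Im (fst (c 0) $ i * cnj (fst v $ j) + fst v $ i * cnj (fst (c 0) $ j)) = 0"
proof -
  define P where "P = fst (c 0) $ i * cnj (fst v $ j) + fst v $ i * cnj (fst (c 0) $ j)"
  have cnjD: "((\<lambda>t. cnj (fst (c t) $ k)) has_vector_derivative cnj (fst v $ k)) (at 0)" for k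
    by (rule bounded_linear.has_vector_derivative[OF bounded_linear_cnj
          has_vector_derivative_components(1)[OF cD]])
  have "((\<lambda>t. fst (c t) $ i * cnj (fst (c t) $ j) - cnj (fst (c t) $ i) * fst (c t) $ j)
      has_vector_derivative (fst (c 0) $ i * cnj (fst v $ j) + fst v $ i * cnj (fst (c 0) $ j))
        - (cnj (fst (c 0) $ i) * fst v $ j + cnj (fst v $ i) * fst (c 0) $ j)) (at 0)"
    by (intro has_vector_derivative_diff has_vector_derivative_mult
        has_vector_derivative_components(1)[OF cD] cnjD)
  then have "((\<lambda>t. fst (c t) $ i * cnj (fst (c t) $ j) - cnj (fst (c t) $ i) * fst (c t) $ j)
      has_vector_derivative P - cnj P) (at 0)"
    unfolding P_def by (simp add: algebra_simps)
  moreover have "(\<lambda>t. fst (c t) $ i * cnj (fst (c t) $ j) - cnj (fst (c t) $ i) * fst (c t) $ j)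
      = (\<lambda>t. 0)"
    by (simp add: cX algebra_simps)
  ultimately have "P - cnj P = 0"
    using vector_derivative_unique_at has_vector_derivative_const by metis
  then show ?thesis unfolding P_def[symmetric] by (simp add: complex_eq_iff)
qed

text \<open>The key limit argument: a reparametrised difference quotient of \<open>g\<close>, with a real weight,
  converges to a real multiple of \<open>g'(u\<^sub>0)\<close>, whether or not the reparametrisation is differentiable.\<close>
lemma reparametrised_velocity_real_multiple:
  fixes g :: "real \<Rightarrow> complex" and s h :: "real \<Rightarrow> real"
  assumes "(g has_vector_derivative D) (at u0)" and "D \<noteq> 0" and s: "(s \<longlongrightarrow> u0) (at 0)"
    and L: "((\<lambda>t. (g (s t) - g u0) * of_real (h t / t)) \<longlongrightarrow> L) (at 0)"
  obtains a where "L = of_real a * D"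
proof -
  obtain Q where Q: "isCont Q u0" "Q u0 = D" "\<And>s. g s - g u0 = (s - u0) *\<^sub>R Q s"
    using has_vector_derivative_Caratheodory[OF assms(1)] by blast
  have "(\<lambda>t. (g (s t) - g u0) * of_real (h t / t)) = (\<lambda>t. of_real ((s t - u0) * (h t / t)) * Q (s t))"
    by (rule ext) (simp add: Q(3) scaleR_conv_of_real)
  then have "((\<lambda>t. of_real ((s t - u0) * (h t / t)) * Q (s t)) \<longlongrightarrow> L) (at 0)"
    using L by simp
  moreover have "((\<lambda>t. Q (s t)) \<longlongrightarrow> D) (at 0)"
    using isCont_tendsto_compose[OF Q(1) s] Q(2) by simp
  ultimately obtain a where "L = of_real a * D"
    by (rule tendsto_real_multiple[OF at_neq_bot _ _ \<open>D \<noteq> 0\<close>])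
  then show ?thesis by (rule that)
qed

section \<open>Symmetric circles\<close>

context
  fixes f :: "complex poly" and z \<zeta> :: "real \<Rightarrow> complex"
  assumes sc: "symmetric_circle f z \<zeta>"
begin

lemma
  shows z_periodic: "z (u + 2*pi) = z u"
    and \<zeta>_periodic: "\<zeta> (u + 2*pi) = \<zeta> u"
    and smooth_z: "smooth_curve z"
    and smooth_\<zeta>: "smooth_curve \<zeta>"
    and circle_in_M1: "(z u)^2 = poly f (\<zeta> u)"
    and circle_injective: "z u = z v \<Longrightarrow> \<zeta> u = \<zeta> v \<Longrightarrow> \<exists>k::int. u - v = 2*pi * of_int k"
    and circle_immersed: "vderiv z u \<noteq> 0 \<or> vderiv \<zeta> u \<noteq> 0"
    and z_odd: "z (- u) = - z u"
    and \<zeta>_even: "\<zeta> (- u) = \<zeta> u"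
    and z_nonzero: "(\<forall>k::int. u \<noteq> pi * of_int k) \<Longrightarrow> z u \<noteq> 0"
  using sc unfolding symmetric_circle_def by blast+

lemma z_has_vector_derivative: "(z has_vector_derivative vderiv z t) (at t)"
  by (rule vderiv_has_vector_derivative[OF smooth_z])

lemma \<zeta>_has_vector_derivative: "(\<zeta> has_vector_derivative vderiv \<zeta> t) (at t)"
  by (rule vderiv_has_vector_derivative[OF smooth_\<zeta>])

lemma z_zero: "z 0 = 0"
  using z_odd[of 0] by simp

lemma z_pi: "z pi = 0"
  using z_periodic[of "- pi"] z_odd[of pi] by simp

lemma z_eq_0_iff: "z u = 0 \<longleftrightarrow> (\<exists>k::int. u = pi * of_int k)"
proof
  assume "\<exists>k::int. u = pi * of_int k"
  then obtain k :: int where "u = pi * of_int k" ..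
  moreover have "real_of_int k = of_int (k mod 2) + 2 * of_int (k div 2)"
    by (metis mod_mult_div_eq of_int_add of_int_mult of_int_numeral)
  ultimately have u: "u = pi * of_int (k mod 2) + 2*pi * of_int (k div 2)"
    by (simp add: algebra_simps)
  have "z u = z (pi * of_int (k mod 2))"
    unfolding u by (rule periodic_add_int_multiple[where g = z, OF z_periodic])
  moreover have "k mod 2 = 0 \<or> k mod 2 = 1" by auto
  ultimately show "z u = 0" using z_zero z_pi by auto
qed (use z_nonzero in blast)

lemma z_zero_on_half_circle:
  assumes "u \<in> {0..pi}" and "z u = 0"
  shows "u \<in> {0, pi}"
proof -
  obtain k :: int where k: "u = pi * of_int k" using assms(2) z_eq_0_iff by blast
  then have "pi * 0 \<le> pi * of_int k" "pi * of_int k \<le> pi * 1" using assms(1) by auto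
  then have "0 \<le> k" "k \<le> 1" by (simp_all only: mult_le_cancel_left_pos[OF pi_gt_zero] of_int_le_iff
      of_int_0_le_iff of_int_le_1_iff)
  then have "k = 0 \<or> k = 1" by linarith
  then show ?thesis using k by auto
qed

lemma vderiv_\<zeta>_periodic: "vderiv \<zeta> (u + 2*pi) = vderiv \<zeta> u"
  by (rule vderiv_periodic[OF \<zeta>_periodic smooth_\<zeta>])

lemma vderiv_\<zeta>_odd: "vderiv \<zeta> (- u) = - vderiv \<zeta> u"
  using vderiv_reflect[of \<zeta> 1, OF _ smooth_\<zeta>] \<zeta>_even by (simp add: minus_equation_iff)

lemma vderiv_\<zeta>_zero_pi:
  assumes "u \<in> {0, pi}"
  shows "vderiv \<zeta> u = 0"
  using assms vderiv_\<zeta>_odd[of 0] vderiv_\<zeta>_odd[of pi] vderiv_\<zeta>_periodic[of "- pi"] by auto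

lemma vderiv_z_nonzero_zero_pi:
  assumes "u \<in> {0, pi}"
  shows "vderiv z u \<noteq> 0"
  using circle_immersed[of u] vderiv_\<zeta>_zero_pi[OF assms] by auto

lemma circle_velocity_in_M1:
  "2 * z u * vderiv z u = poly (pderiv f) (\<zeta> u) * vderiv \<zeta> u"
proof -
  have "((\<lambda>t. z t * z t) has_vector_derivative (z u * vderiv z u + vderiv z u * z u)) (at u)"
    by (intro has_vector_derivative_mult z_has_vector_derivative)
  moreover have "((poly f \<circ> \<zeta>) has_vector_derivative (vderiv \<zeta> u * poly (pderiv f) (\<zeta> u))) (at u)"
    by (intro field_vector_diff_chain_at \<zeta>_has_vector_derivative poly_DERIV)
  moreover have "poly f \<circ> \<zeta> = (\<lambda>t. z t * z t)"
    using circle_in_M1 by (auto simp: power2_eq_square o_def)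
  ultimately show ?thesis using vector_derivative_unique_at by (fastforce simp: algebra_simps)
qed

lemma reduce_to_half_circle:
  obtains u0 and \<sigma> :: real where "u0 \<in> {0..pi}" "\<sigma> = 1 \<or> \<sigma> = -1"
    "z u = of_real \<sigma> * z u0" "\<zeta> u = \<zeta> u0" "vderiv \<zeta> u = of_real \<sigma> * vderiv \<zeta> u0"
proof -
  define k where "k = \<lfloor>u / (2*pi)\<rfloor>"
  define u1 where "u1 = u - 2*pi * of_int k"
  have "of_int k \<le> u / (2*pi)" "u / (2*pi) < of_int k + 1" unfolding k_def by linarith+
  then have u1: "0 \<le> u1" "u1 < 2*pi" unfolding u1_def by (auto simp: field_simps)
  have "u = u1 + 2*pi * of_int k" unfolding u1_def by simp
  then have shift: "z u = z u1" "\<zeta> u = \<zeta> u1" "vderiv \<zeta> u = vderiv \<zeta> u1"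
    by (metis periodic_add_int_multiple z_periodic \<zeta>_periodic vderiv_\<zeta>_periodic)+
  show ?thesis
  proof (cases "u1 \<le> pi")
    case True
    then show ?thesis using that[of u1 1] u1 shift by auto
  next
    case False
    \<comment> \<open>reflect \<open>u1 \<in> (\<pi>, 2\<pi>)\<close> to \<open>2\<pi> - u1 \<in> (0, \<pi>)\<close>\<close>
    have "u1 = - (2*pi - u1) + 2*pi" by simp
    then have "z u1 = - z (2*pi - u1)" "\<zeta> u1 = \<zeta> (2*pi - u1)"
        "vderiv \<zeta> u1 = - vderiv \<zeta> (2*pi - u1)"
      by (metis z_periodic z_odd \<zeta>_periodic \<zeta>_even vderiv_\<zeta>_periodic vderiv_\<zeta>_odd)+
    then show ?thesis using that[of "2*pi - u1" "-1"] u1 shift False by auto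
  qed
qed

lemma inj_on_half_circle:
  assumes u: "u \<in> {0..pi}" and v: "v \<in> {0..pi}"
    and "(z u)^2 = (z v)^2" and "\<zeta> u = \<zeta> v"
  shows "u = v"
proof -
  have "z u = z v \<or> z u = z (- v)" using assms(3) z_odd by (simp add: power2_eq_iff)
  moreover have "\<zeta> u = \<zeta> (- v)" using assms(4) \<zeta>_even by simp
  ultimately obtain k :: int where "u - v = 2*pi * of_int k \<or> u + v = 2*pi * of_int k"
    using circle_injective assms(4) by (metis diff_minus_eq_add)
  then show ?thesis
  proof
    assume k: "u - v = 2*pi * of_int k"
    have "\<bar>u - v\<bar> \<le> pi" using u v by auto
    then have "\<bar>real_of_int k\<bar> < 1" unfolding k by (simp add: abs_mult)
    then have "k = 0" by linarith
    then show ?thesis using k by simp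
  next
    assume k: "u + v = 2*pi * of_int k"
    have "0 \<le> 2*pi * of_int k" "2*pi * of_int k \<le> 2*pi" using u v k unfolding atLeastAtMost_iff by linarith+
    then have "0 \<le> real_of_int k" "real_of_int k \<le> 1" using pi_gt_zero by (simp_all add: field_simps zero_le_mult_iff)
    then have "k = 0 \<or> k = 1" by linarith
    then show ?thesis using k u v by auto
  qed
qed

section \<open>Tangent vectors of \<open>\<Lambda>\<close>\<close>

lemma Lambda_half_circle:
  assumes "q \<in> (Lambda z \<zeta> :: ((complex^'n) \<times> complex) set)"
  obtains u x where "u \<in> {0..pi}" "x \<in> sphere 0 1" "q = ((\<chi> i. z u * complex_of_real (x $ i)), \<zeta> u)"
proof -
  obtain u' and x' :: "real^'n" where q: "q = ((\<chi> i. z u' * complex_of_real (x' $ i)), \<zeta> u')"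
    and x': "x' \<in> sphere 0 1"
    using assms unfolding Lambda_def by blast
  obtain u and \<sigma> :: real where u: "u \<in> {0..pi}" "\<sigma> = 1 \<or> \<sigma> = -1" "z u' = of_real \<sigma> * z u" "\<zeta> u' = \<zeta> u"
    by (rule reduce_to_half_circle)
  have "\<sigma> *\<^sub>R x' \<in> sphere 0 1" using x' u(2) by auto
  moreover have "q = ((\<chi> i. z u * complex_of_real ((\<sigma> *\<^sub>R x') $ i)), \<zeta> u)"
    unfolding q using u by (auto simp: vec_eq_iff)
  ultimately show ?thesis using that u(1) by blast
qed

lemma Lambda_curve_half_circle:
  assumes "\<And>t. c t \<in> (Lambda z \<zeta> :: ((complex^'n) \<times> complex) set)"
  obtains s X where "\<And>t. s t \<in> {0..pi}" "\<And>t. X t \<in> sphere 0 1"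
    "\<And>t. c t = ((\<chi> i. z (s t) * complex_of_real (X t $ i)), \<zeta> (s t))"
proof -
  have "\<forall>t. \<exists>ux. fst ux \<in> {0..pi} \<and> snd ux \<in> sphere (0::real^'n) 1 \<and>
      c t = ((\<chi> i. z (fst ux) * complex_of_real (snd ux $ i)), \<zeta> (fst ux))"
  proof
    fix t
    obtain u x where "u \<in> {0..pi}" "x \<in> sphere (0::real^'n) 1"
      "c t = ((\<chi> i. z u * complex_of_real (x $ i)), \<zeta> u)"
      by (rule Lambda_half_circle[OF assms])
    then show "\<exists>ux. fst ux \<in> {0..pi} \<and> snd ux \<in> sphere (0::real^'n) 1 \<and>
      c t = ((\<chi> i. z (fst ux) * complex_of_real (snd ux $ i)), \<zeta> (fst ux))"
      by (intro exI[of _ "(u, x)"]) simp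
  qed
  then obtain S where S: "\<And>t. fst (S t) \<in> {0..pi} \<and> snd (S t) \<in> sphere (0::real^'n) 1 \<and>
      c t = ((\<chi> i. z (fst (S t)) * complex_of_real (snd (S t) $ i)), \<zeta> (fst (S t)))"
    by metis
  show ?thesis by (rule that[of "\<lambda>t. fst (S t)" "\<lambda>t. snd (S t)"]) (use S in blast)+
qed

text \<open>On the half circle, \<open>u\<close> is a continuous function of \<open>(z(u)\<^sup>2, \<zeta>(u))\<close>, the data that survive
  the \<open>x\<close>-rotation.\<close>
lemma half_circle_parameter_tendsto:
  assumes s: "\<And>t. s t \<in> {0..pi}" and u0: "u0 \<in> {0..pi}"
    and lim: "((\<lambda>t. ((z (s t))^2, \<zeta> (s t))) \<longlongrightarrow> ((z u0)^2, \<zeta> u0)) F"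
  shows "(s \<longlongrightarrow> u0) F"
proof -
  define G where "G u = ((z u)^2, \<zeta> u)" for u
  have injG: "inj_on G {0..pi}"
    by (rule inj_onI) (auto simp: G_def intro: inj_on_half_circle)
  have "continuous_on UNIV z" "continuous_on UNIV \<zeta>"
    using z_has_vector_derivative \<zeta>_has_vector_derivative
    by (auto intro!: continuous_at_imp_continuous_on has_vector_derivative_continuous)
  then have "continuous_on {0..pi} G"
    unfolding G_def by (auto intro!: continuous_intros elim: continuous_on_subset)
  then have "continuous_on (G ` {0..pi}) (inv_into {0..pi} G)"
    by (rule continuous_on_inv[OF _ compact_Icc]) (simp add: injG)
  from continuous_on_tendsto_compose[OF this lim[folded G_def]]
  have "((\<lambda>t. inv_into {0..pi} G (G (s t))) \<longlongrightarrow> inv_into {0..pi} G (G u0)) F"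
    using s u0 by simp
  then show ?thesis using s u0 injG by simp
qed

lemma tangent_curve_lift:
  assumes v: "v \<in> tangent_vectors (Lambda z \<zeta> :: ((complex^'n) \<times> complex) set)
      ((\<chi> i. z u0 * complex_of_real (x0 $ i)), \<zeta> u0)"
    and u0: "u0 \<in> {0..pi}" and x0: "x0 \<in> sphere 0 1"
  obtains c X s where "c 0 = ((\<chi> i. z u0 * complex_of_real (x0 $ i)), \<zeta> u0)"
    "(c has_vector_derivative v) (at 0)" "\<And>t. X t \<in> sphere 0 1"
    "\<And>t. c t = ((\<chi> i. z (s t) * complex_of_real (X t $ i)), \<zeta> (s t))" "(s \<longlongrightarrow> u0) (at 0)"
proof -
  obtain c where c: "c 0 = ((\<chi> i. z u0 * complex_of_real (x0 $ i)), \<zeta> u0)"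
    "\<And>t. c t \<in> Lambda z \<zeta>" "(c has_vector_derivative v) (at 0)"
    using v unfolding tangent_vectors_def by blast
  obtain s X where sX: "\<And>t. s t \<in> {0..pi}" "\<And>t. X t \<in> sphere 0 1"
      "\<And>t. c t = ((\<chi> i. z (s t) * complex_of_real (X t $ i)), \<zeta> (s t))"
    by (rule Lambda_curve_half_circle[OF c(2)]) (rule that)
  define H where "H q = ((\<Sum>i\<in>UNIV. (fst q $ i)^2), snd q)" for q :: "(complex^'n) \<times> complex"
  have H: "H ((\<chi> i. z u * complex_of_real (x $ i)), \<zeta> u) = ((z u)^2, \<zeta> u)"
    if "x \<in> sphere 0 1" for u and x :: "real^'n"
  proof -
    have "(\<Sum>i\<in>UNIV. (z u * complex_of_real (x $ i))^2) = (z u)^2 * of_real (\<Sum>i\<in>UNIV. (x$i)^2)"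
      by (simp add: power_mult_distrib sum_distrib_left)
    then show ?thesis using that unfolding sphere_iff_sum_squares by (simp add: H_def)
  qed
  have "((\<lambda>t. H (c t)) \<longlongrightarrow> H (c 0)) (at 0)"
    using has_vector_derivative_continuous[OF c(3)]
    unfolding H_def continuous_at by (intro tendsto_intros)
  moreover have "H (c 0) = ((z u0)^2, \<zeta> u0)" using H[OF x0] by (simp add: c(1))
  moreover have "H (c t) = ((z (s t))^2, \<zeta> (s t))" for t using H[OF sX(2)] by (simp add: sX(3))
  ultimately have "((\<lambda>t. ((z (s t))^2, \<zeta> (s t))) \<longlongrightarrow> ((z u0)^2, \<zeta> u0)) (at 0)" by simp
  then have "(s \<longlongrightarrow> u0) (at 0)" by (rule half_circle_parameter_tendsto[OF sX(1) u0])
  then show ?thesis using that c sX by blast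
qed

lemma tangent_sum_squares:
  fixes c :: "real \<Rightarrow> (complex^'n) \<times> complex" and X :: "real \<Rightarrow> real^'n"
  assumes cD: "(c has_vector_derivative v) (at 0)"
    and cX: "\<And>t. c t = ((\<chi> i. z (s t) * complex_of_real (X t $ i)), \<zeta> (s t))"
    and X: "\<And>t. X t \<in> sphere 0 1"
  shows "2 * (\<Sum>i\<in>UNIV. fst (c 0) $ i * fst v $ i) = snd v * poly (pderiv f) (snd (c 0))"
proof -
  have eq: "(\<lambda>t. \<Sum>i\<in>UNIV. fst (c t) $ i * fst (c t) $ i) = (\<lambda>t. poly f (snd (c t)))"
  proof
    fix t
    have "(\<Sum>i\<in>UNIV. fst (c t) $ i * fst (c t) $ i) = (z (s t))^2 * of_real (\<Sum>i\<in>UNIV. (X t $ i)^2)"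
      by (simp add: cX power2_eq_square sum_distrib_left algebra_simps)
    then show "(\<Sum>i\<in>UNIV. fst (c t) $ i * fst (c t) $ i) = poly f (snd (c t))"
      using X[of t] circle_in_M1[of "s t"] unfolding sphere_iff_sum_squares by (simp add: cX)
  qed
  have "((\<lambda>t. \<Sum>i\<in>UNIV. fst (c t) $ i * fst (c t) $ i) has_vector_derivative
      (\<Sum>i\<in>UNIV. fst (c 0) $ i * fst v $ i + fst v $ i * fst (c 0) $ i)) (at 0)"
    by (intro has_vector_derivative_sum has_vector_derivative_mult has_vector_derivative_components[OF cD])
  moreover have "((poly f \<circ> (\<lambda>t. snd (c t))) has_vector_derivative
      (snd v * poly (pderiv f) (snd (c 0)))) (at 0)"
    by (intro field_vector_diff_chain_at has_vector_derivative_components[OF cD] poly_DERIV)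
  ultimately have "(\<Sum>i\<in>UNIV. fst (c 0) $ i * fst v $ i + fst v $ i * fst (c 0) $ i)
      = snd v * poly (pderiv f) (snd (c 0))"
    unfolding eq o_def by (rule vector_derivative_unique_at)
  then show ?thesis by (simp add: sum.distrib mult.commute sum_distrib_left)
qed

lemma tangent_vector_regular:
  fixes x0 :: "real^'n"
  assumes v: "v \<in> tangent_vectors (Lambda z \<zeta> :: ((complex^'n) \<times> complex) set)
      ((\<chi> i. z u0 * complex_of_real (x0 $ i)), \<zeta> u0)"
    and u0: "u0 \<in> {0..pi}" and x0: "x0 \<in> sphere 0 1" and z0: "z u0 \<noteq> 0"
  obtains a y where "(\<Sum>i\<in>UNIV. x0$i * y$i) = 0"
    "v = ((\<chi> i. of_real a * vderiv z u0 * of_real (x0$i) + z u0 * of_real (y$i)), of_real a * vderiv \<zeta> u0)"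
proof -
  obtain c X s where c: "c 0 = ((\<chi> i. z u0 * complex_of_real (x0 $ i)), \<zeta> u0)"
    "(c has_vector_derivative v) (at 0)" "\<And>t. X t \<in> sphere 0 1"
    "\<And>t. c t = ((\<chi> i. z (s t) * complex_of_real (X t $ i)), \<zeta> (s t))" "(s \<longlongrightarrow> u0) (at 0)"
    by (rule tangent_curve_lift[OF v u0 x0]) (rule that)
  have d\<zeta>: "vderiv \<zeta> u0 \<noteq> 0"
    using circle_velocity_in_M1[of u0] circle_immersed[of u0] z0 by auto
  have "((\<lambda>t. snd ((c t - c 0) /\<^sub>R (t - 0))) \<longlongrightarrow> snd v) (at 0)"
    by (rule tendsto_snd[OF has_vector_derivative_difference_quotient[OF c(2)]])
  then have "((\<lambda>t. (\<zeta> (s t) - \<zeta> u0) * of_real (1 / t)) \<longlongrightarrow> snd v) (at 0)"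
    using c(1,4) by (simp add: scaleR_conv_of_real divide_inverse mult.commute)
  then obtain a where snd_v: "snd v = of_real a * vderiv \<zeta> u0"
    by (rule reparametrised_velocity_real_multiple[OF \<zeta>_has_vector_derivative d\<zeta> c(5)])
  have "2 * z u0 * (\<Sum>i\<in>UNIV. of_real (x0$i) * fst v $ i) = snd v * poly (pderiv f) (\<zeta> u0)"
    using tangent_sum_squares[OF c(2,4,3)] c(1)
    by (simp add: sum_distrib_left algebra_simps)
  also have "\<dots> = 2 * z u0 * (of_real a * vderiv z u0)"
    using snd_v circle_velocity_in_M1[of u0] by (simp add: algebra_simps)
  finally have "(\<Sum>i\<in>UNIV. of_real (x0$i) * fst v $ i) = of_real a * vderiv z u0" using z0 by simp
  moreover have "Im (z u0 * of_real (x0$i) * cnj (fst v $ j) + fst v $ i * cnj (z u0 * of_real (x0$j))) = 0"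
    for i j
  proof -
    have "Im (fst (c 0) $ i * cnj (fst v $ j) + fst v $ i * cnj (fst (c 0) $ j)) = 0"
      by (rule tangent_products_real[OF c(2)]) (simp add: c(4))
    then show ?thesis using c(1) by simp
  qed
  ultimately obtain y where "(\<Sum>i\<in>UNIV. x0$i * y$i) = 0"
    "\<And>i. fst v $ i = of_real a * vderiv z u0 * of_real (x0$i) + z u0 * of_real (y$i)"
    by (rule decompose_along_unit_vector[OF x0 z0]) (rule that)
  with snd_v have "v = ((\<chi> i. of_real a * vderiv z u0 * of_real (x0$i) + z u0 * of_real (y$i)),
      of_real a * vderiv \<zeta> u0)"
    by (simp add: prod_eq_iff vec_eq_iff)
  with \<open>(\<Sum>i\<in>UNIV. x0$i * y$i) = 0\<close> show ?thesis by (rule that)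
qed

lemma unit_frame_tangent:
  fixes x0 :: "real^'n"
  assumes x0: "x0 \<in> sphere 0 1" and xk: "x0 $ k \<noteq> 0"
  shows "(if j = k then ((\<chi> i. vderiv z u0 * of_real (x0$i)), vderiv \<zeta> u0)
      else ((\<chi> i. z u0 * of_real (unit_frame x0 k $ i $ j)), 0))
    \<in> tangent_vectors (Lambda z \<zeta> :: ((complex^'n) \<times> complex) set) ((\<chi> i. z u0 * complex_of_real (x0 $ i)), \<zeta> u0)"
proof (cases "j = k")
  case True
  then show ?thesis
    using tangent_along_circle[OF z_has_vector_derivative \<zeta>_has_vector_derivative x0] by simp
next
  case False
  have "(\<Sum>i\<in>UNIV. x0$i * (\<chi> i. unit_frame x0 k $ i $ j) $ i) = 0"
    using unit_frame_column_orthogonal[OF xk False] by simp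
  from tangent_along_sphere[OF x0 this] show ?thesis using False by simp
qed

lemma tangent_frame_regular:
  fixes x0 :: "real^'n"
  assumes v: "\<And>j. v j \<in> tangent_vectors (Lambda z \<zeta> :: ((complex^'n) \<times> complex) set)
      ((\<chi> i. z u0 * complex_of_real (x0 $ i)), \<zeta> u0)"
    and u0: "u0 \<in> {0..pi}" and x0: "x0 \<in> sphere 0 1" and z0: "z u0 \<noteq> 0"
  obtains a Y where "\<And>j. (\<Sum>i\<in>UNIV. x0$i * Y j $ i) = 0"
    and "\<And>j. v j = ((\<chi> i. of_real (a j) * vderiv z u0 * of_real (x0$i) + z u0 * of_real (Y j $ i)),
        of_real (a j) * vderiv \<zeta> u0)"
proof -
  have "\<forall>j. \<exists>aY. (\<Sum>i\<in>UNIV. x0$i * snd aY $ i) = 0 \<and>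
      v j = ((\<chi> i. of_real (fst aY) * vderiv z u0 * of_real (x0$i) + z u0 * of_real (snd aY $ i)),
        of_real (fst aY) * vderiv \<zeta> u0)"
  proof
    fix j
    obtain a and Y :: "real^'n" where "(\<Sum>i\<in>UNIV. x0$i * Y$i) = 0"
      "v j = ((\<chi> i. of_real a * vderiv z u0 * of_real (x0$i) + z u0 * of_real (Y$i)), of_real a * vderiv \<zeta> u0)"
      by (rule tangent_vector_regular[OF v u0 x0 z0]) (rule that)
    then show "\<exists>aY. (\<Sum>i\<in>UNIV. x0$i * snd aY $ i) = 0 \<and>
      v j = ((\<chi> i. of_real (fst aY) * vderiv z u0 * of_real (x0$i) + z u0 * of_real (snd aY $ i)),
        of_real (fst aY) * vderiv \<zeta> u0)"
      by (intro exI[of _ "(a, Y)"]) simp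
  qed
  then obtain F where "\<forall>j. (\<Sum>i\<in>UNIV. x0$i * snd (F j) $ i) = 0 \<and>
      v j = ((\<chi> i. of_real (fst (F j)) * vderiv z u0 * of_real (x0$i) + z u0 * of_real (snd (F j) $ i)),
        of_real (fst (F j)) * vderiv \<zeta> u0)"
    by (rule choice[THEN exE])
  then show ?thesis by (intro that[of "\<lambda>j. snd (F j)" "\<lambda>j. fst (F j)"]) auto
qed

context
  assumes sz: "simple_zeros f"
begin

lemma pderiv_nonzero_where_z_zero: "z u = 0 \<Longrightarrow> poly (pderiv f) (\<zeta> u) \<noteq> 0"
  using sz circle_in_M1[of u] unfolding simple_zeros_def by simp

lemma tangent_vector_singular:
  fixes x0 :: "real^'n"
  assumes v: "v \<in> tangent_vectors (Lambda z \<zeta> :: ((complex^'n) \<times> complex) set)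
      ((\<chi> i. z u0 * complex_of_real (x0 $ i)), \<zeta> u0)"
    and u0: "u0 \<in> {0..pi}" and x0: "x0 \<in> sphere 0 1" and z0: "z u0 = 0"
  obtains y :: "real^'n" where "v = ((\<chi> i. vderiv z u0 * of_real (y$i)), 0)"
proof -
  obtain c X s where c: "c 0 = ((\<chi> i. z u0 * complex_of_real (x0 $ i)), \<zeta> u0)"
    "(c has_vector_derivative v) (at 0)" "\<And>t. X t \<in> sphere 0 1"
    "\<And>t. c t = ((\<chi> i. z (s t) * complex_of_real (X t $ i)), \<zeta> (s t))" "(s \<longlongrightarrow> u0) (at 0)"
    by (rule tangent_curve_lift[OF v u0 x0]) (rule that)
  have dz: "vderiv z u0 \<noteq> 0"
    by (rule vderiv_z_nonzero_zero_pi[OF z_zero_on_half_circle[OF u0 z0]])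
  have "snd v * poly (pderiv f) (\<zeta> u0) = 0"
    using tangent_sum_squares[OF c(2,4,3)] c(1) z0 by simp
  then have snd_v: "snd v = 0" using pderiv_nonzero_where_z_zero[OF z0] by simp
  have "\<exists>r. fst v $ i = of_real r * vderiv z u0" for i
  proof -
    have "((\<lambda>t. fst ((c t - c 0) /\<^sub>R (t - 0)) $ i) \<longlongrightarrow> fst v $ i) (at 0)"
      by (rule tendsto_vec_nth[OF tendsto_fst[OF has_vector_derivative_difference_quotient[OF c(2)]]])
    moreover have "fst ((c t - c 0) /\<^sub>R (t - 0)) $ i = (z (s t) - z u0) * of_real (X t $ i / t)" for t
      using c(1) c(4)[of t] z0 by (simp add: scaleR_conv_of_real[where 'a=complex] divide_inverse mult_ac)
    ultimately have "((\<lambda>t. (z (s t) - z u0) * of_real (X t $ i / t)) \<longlongrightarrow> fst v $ i) (at 0)"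
      by simp
    then show ?thesis
      by (rule reparametrised_velocity_real_multiple[OF z_has_vector_derivative dz c(5)]) blast
  qed
  then obtain y where "\<And>i. fst v $ i = of_real (y i) * vderiv z u0" by metis
  then have "v = ((\<chi> i. vderiv z u0 * of_real ((\<chi> i. y i) $ i)), 0)"
    using snd_v by (simp add: prod_eq_iff vec_eq_iff mult.commute)
  then show ?thesis by (rule that)
qed

lemma isotropic_at_Lambda_point:
  fixes x0 :: "real^'n"
  assumes u0: "u0 \<in> {0..pi}" and x0: "x0 \<in> sphere 0 1"
    and v: "v \<in> tangent_vectors (Lambda z \<zeta> :: ((complex^'n) \<times> complex) set)
      ((\<chi> i. z u0 * complex_of_real (x0 $ i)), \<zeta> u0)"
    and w: "w \<in> tangent_vectors (Lambda z \<zeta> :: ((complex^'n) \<times> complex) set)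
      ((\<chi> i. z u0 * complex_of_real (x0 $ i)), \<zeta> u0)"
  shows "kahler_form v w = 0"
proof (cases "z u0 = 0")
  case True
  obtain y where "v = ((\<chi> i. vderiv z u0 * of_real (y$i)), 0)"
    by (rule tangent_vector_singular[OF v u0 x0 True])
  moreover obtain y' where "w = ((\<chi> i. vderiv z u0 * of_real (y'$i)), 0)"
    by (rule tangent_vector_singular[OF w u0 x0 True])
  ultimately show ?thesis by (simp add: kahler_form_real_multiples)
next
  case False
  obtain a y where "(\<Sum>i\<in>UNIV. x0$i * y$i) = 0" and "v = ((\<chi> i. of_real a * vderiv z u0 * of_real (x0$i)
      + z u0 * of_real (y$i)), of_real a * vderiv \<zeta> u0)"
    by (rule tangent_vector_regular[OF v u0 x0 False]) (rule that)
  moreover obtain b y' where "(\<Sum>i\<in>UNIV. x0$i * y'$i) = 0" and "w = ((\<chi> i. of_real b * vderiv z u0 * of_real (x0$i)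
      + z u0 * of_real (y'$i)), of_real b * vderiv \<zeta> u0)"
    by (rule tangent_vector_regular[OF w u0 x0 False]) (rule that)
  ultimately show ?thesis by (simp add: kahler_form_regular_tangents)
qed

section \<open>\<open>\<Omega>\<close> on tangent frames of \<open>\<Lambda>\<close>\<close>

text \<open>Where \<open>f'(\<zeta>) = 0\<close>, \<open>Omega\<close> uses the holomorphic extension through the coordinate \<open>k\<close>
  picked by \<open>SOME\<close>; at a point \<open>z(u\<^sub>0) x\<^sub>0\<close> this is a coordinate with \<open>x\<^sub>0\<^sub>k \<noteq> 0\<close>.\<close>
lemma Omega_chosen_coordinate:
  fixes x0 :: "real^'n"
  assumes "z u0 \<noteq> 0" and "x0 \<in> sphere 0 1"
  obtains k where "x0 $ k \<noteq> 0"
    and "\<And>v. poly (pderiv f) (\<zeta> u0) = 0 \<Longrightarrow> Omega f ((\<chi> i. z u0 * complex_of_real (x0 $ i)), \<zeta> u0) v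
      = det (\<chi> i j. if i = k then snd (v j) else fst (v j) $ i) / (2 * (z u0 * of_real (x0 $ k)))"
proof
  define k where "k = (SOME k. (\<chi> i. z u0 * complex_of_real (x0 $ i)) $ k \<noteq> 0)"
  obtain k' where "x0 $ k' \<noteq> 0" using sphere_has_nonzero_component[OF assms(2)] .
  then have "\<exists>k. (\<chi> i. z u0 * complex_of_real (x0 $ i)) $ k \<noteq> 0" using assms(1) by auto
  from someI_ex[OF this, folded k_def] show "x0 $ k \<noteq> 0" by simp
  show "Omega f ((\<chi> i. z u0 * complex_of_real (x0 $ i)), \<zeta> u0) v
      = det (\<chi> i j. if i = k then snd (v j) else fst (v j) $ i) / (2 * (z u0 * of_real (x0 $ k)))"
    if "poly (pderiv f) (\<zeta> u0) = 0" for v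
    using that by (simp add: Omega_def Let_def k_def)
qed

lemma Omega_regular_real_multiple:
  fixes x0 :: "real^'n"
  assumes u0: "u0 \<in> {0..pi}" and x0: "x0 \<in> sphere 0 1" and z0: "z u0 \<noteq> 0"
    and v: "\<And>j. v j \<in> tangent_vectors (Lambda z \<zeta> :: ((complex^'n) \<times> complex) set)
      ((\<chi> i. z u0 * complex_of_real (x0 $ i)), \<zeta> u0)"
  obtains r where "Omega f ((\<chi> i. z u0 * complex_of_real (x0 $ i)), \<zeta> u0) v
    = of_real r * (vderiv \<zeta> u0 * z u0 powi (int CARD('n) - 2) / 2)"
proof -
  obtain a Y where orth: "\<And>j. (\<Sum>i\<in>UNIV. x0$i * Y j $ i) = 0"
    and vj: "\<And>j. v j = ((\<chi> i. of_real (a j) * vderiv z u0 * of_real (x0$i) + z u0 * of_real (Y j $ i)),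
        of_real (a j) * vderiv \<zeta> u0)"
    by (rule tangent_frame_regular[OF v u0 x0 z0]) (rule that)
  have pw: "z u0 ^ (CARD('n) - 1) = z u0 powi (int CARD('n) - 2) * z u0"
    by (rule power_card_minus_one_eq_powi[OF z0])
  have velocity: "2 * z u0 * vderiv z u0 = poly (pderiv f) (\<zeta> u0) * vderiv \<zeta> u0"
    by (rule circle_velocity_in_M1)
  show ?thesis
  proof (cases "poly (pderiv f) (\<zeta> u0) = 0")
    case False
    obtain r where "det (\<chi> i j. of_real (a j) * vderiv z u0 * of_real (x0$i) + z u0 * of_real (Y j $ i))
        = vderiv z u0 * z u0 ^ (CARD('n) - 1) * of_real r"
      by (rule det_columns_along_unit_vector[OF x0 orth])
    then have "Omega f ((\<chi> i. z u0 * complex_of_real (x0 $ i)), \<zeta> u0) v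
        = vderiv z u0 * z u0 ^ (CARD('n) - 1) * of_real r / poly (pderiv f) (\<zeta> u0)"
      using False by (simp add: Omega_def vj)
    also have "\<dots> = of_real r * (vderiv \<zeta> u0 * z u0 powi (int CARD('n) - 2) / 2)"
      using False velocity unfolding pw by (simp add: field_simps)
    finally show ?thesis by (rule that)
  next
    case True
    obtain k where xk: "x0 $ k \<noteq> 0"
      and \<Omega>: "poly (pderiv f) (\<zeta> u0) = 0 \<Longrightarrow> Omega f ((\<chi> i. z u0 * complex_of_real (x0 $ i)), \<zeta> u0) v
        = det (\<chi> i j. if i = k then snd (v j) else fst (v j) $ i) / (2 * (z u0 * of_real (x0 $ k)))"
      by (rule Omega_chosen_coordinate[OF z0 x0]) (rule that)
    have "vderiv z u0 = 0" using True velocity z0 by simp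
    define R where "R = (\<chi> i j. if i = k then a j else Y j $ i)"
    have "(\<chi> i j. if i = k then snd (v j) else fst (v j) $ i)
        = (\<chi> i j. (if i = k then vderiv \<zeta> u0 else z u0) * complex_of_real (R $ i $ j))"
      using \<open>vderiv z u0 = 0\<close> by (simp add: vec_eq_iff vj R_def)
    then have "det (\<chi> i j. if i = k then snd (v j) else fst (v j) $ i)
        = vderiv \<zeta> u0 * z u0 ^ (CARD('n) - 1) * of_real (det R)"
      by (simp only: det_scaled_rows_of_real prod_if_eq_const)
    then have "Omega f ((\<chi> i. z u0 * complex_of_real (x0 $ i)), \<zeta> u0) v
        = of_real (det R / x0 $ k) * (vderiv \<zeta> u0 * z u0 powi (int CARD('n) - 2) / 2)"
      using z0 xk unfolding \<Omega>[OF True] pw by (simp add: field_simps)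
    then show ?thesis by (rule that)
  qed
qed

text \<open>The witness frame is \<open>(z' x, \<zeta>')\<close> together with the \<open>(z N\<^sub>j, 0)\<close> for the columns \<open>N\<^sub>j\<close>,
  \<open>j \<noteq> k\<close>, of \<open>N = unit_frame x k\<close>.\<close>
lemma Omega_regular_witness:
  fixes x0 :: "real^'n"
  assumes u0: "u0 \<in> {0..pi}" and x0: "x0 \<in> sphere 0 1" and z0: "z u0 \<noteq> 0"
  obtains v r where "\<And>j. v j \<in> tangent_vectors (Lambda z \<zeta> :: ((complex^'n) \<times> complex) set)
      ((\<chi> i. z u0 * complex_of_real (x0 $ i)), \<zeta> u0)"
    and "r \<noteq> 0" and "Omega f ((\<chi> i. z u0 * complex_of_real (x0 $ i)), \<zeta> u0) v
      = of_real r * (vderiv \<zeta> u0 * z u0 powi (int CARD('n) - 2) / 2)"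
proof -
  obtain k where xk: "x0 $ k \<noteq> 0"
    and \<Omega>: "poly (pderiv f) (\<zeta> u0) = 0 \<Longrightarrow> Omega f ((\<chi> i. z u0 * complex_of_real (x0 $ i)), \<zeta> u0) v
      = det (\<chi> i j. if i = k then snd (v j) else fst (v j) $ i) / (2 * (z u0 * of_real (x0 $ k)))" for v
    by (rule Omega_chosen_coordinate[OF z0 x0]) (rule that)
  define v where "v j = (if j = k then ((\<chi> i. vderiv z u0 * of_real (x0$i)), vderiv \<zeta> u0)
      else ((\<chi> i. z u0 * of_real (unit_frame x0 k $ i $ j)), 0))" for j
  have tangent: "v j \<in> tangent_vectors (Lambda z \<zeta> :: ((complex^'n) \<times> complex) set)
      ((\<chi> i. z u0 * complex_of_real (x0 $ i)), \<zeta> u0)" for j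
    unfolding v_def by (rule unit_frame_tangent[OF x0 xk])
  have pw: "z u0 ^ (CARD('n) - 1) = z u0 powi (int CARD('n) - 2) * z u0"
    by (rule power_card_minus_one_eq_powi[OF z0])
  have velocity: "2 * z u0 * vderiv z u0 = poly (pderiv f) (\<zeta> u0) * vderiv \<zeta> u0"
    by (rule circle_velocity_in_M1)
  have dN: "det (unit_frame x0 k) \<noteq> 0" by (rule det_unit_frame_nonzero[OF xk x0])
  show ?thesis
  proof (cases "poly (pderiv f) (\<zeta> u0) = 0")
    case False
    have "(\<chi> i j. fst (v j) $ i)
        = (\<chi> i j. if j = k then vderiv z u0 * of_real (x0$i) else z u0 * of_real (unit_frame x0 k $ i $ j))"
      by (simp add: vec_eq_iff v_def)
    then have "Omega f ((\<chi> i. z u0 * complex_of_real (x0 $ i)), \<zeta> u0) v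
        = vderiv z u0 * z u0 ^ (CARD('n) - 1) * of_real (det (unit_frame x0 k)) / poly (pderiv f) (\<zeta> u0)"
      using False by (simp add: Omega_def det_unit_frame_scaled)
    also have "\<dots> = of_real (det (unit_frame x0 k)) * (vderiv \<zeta> u0 * z u0 powi (int CARD('n) - 2) / 2)"
      using False velocity unfolding pw by (simp add: field_simps)
    finally show ?thesis by (rule that[of v, OF tangent dN])
  next
    case True
    have "vderiv z u0 = 0" using True velocity z0 by simp
    then have "(\<chi> i j. if i = k then snd (v j) else fst (v j) $ i)
        = (\<chi> i j. if i = j then (if i = k then vderiv \<zeta> u0 else z u0) else 0)"
      by (simp add: vec_eq_iff v_def unit_frame_def)
    then have "det (\<chi> i j. if i = k then snd (v j) else fst (v j) $ i) = vderiv \<zeta> u0 * z u0 ^ (CARD('n) - 1)"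
      by (simp add: det_diagonal prod_if_eq_const)
    then have "Omega f ((\<chi> i. z u0 * complex_of_real (x0 $ i)), \<zeta> u0) v
        = of_real (1 / x0 $ k) * (vderiv \<zeta> u0 * z u0 powi (int CARD('n) - 2) / 2)"
      using z0 xk unfolding \<Omega>[OF True] pw by (simp add: field_simps)
    moreover have "1 / x0 $ k \<noteq> 0" using xk by simp
    ultimately show ?thesis by (rule that[of v, OF tangent, rotated])
  qed
qed

lemma Omega_singular_real_multiple:
  fixes x0 :: "real^'n"
  assumes u0: "u0 \<in> {0..pi}" and x0: "x0 \<in> sphere 0 1" and z0: "z u0 = 0"
    and v: "\<And>j. v j \<in> tangent_vectors (Lambda z \<zeta> :: ((complex^'n) \<times> complex) set)
      ((\<chi> i. z u0 * complex_of_real (x0 $ i)), \<zeta> u0)"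
  obtains r where "Omega f ((\<chi> i. z u0 * complex_of_real (x0 $ i)), \<zeta> u0) v
    = of_real r * (vderiv z u0 ^ CARD('n) / poly (pderiv f) (\<zeta> u0))"
proof -
  have "\<forall>j. \<exists>y::real^'n. v j = ((\<chi> i. vderiv z u0 * of_real (y$i)), 0)"
  proof
    fix j
    obtain y :: "real^'n" where "v j = ((\<chi> i. vderiv z u0 * of_real (y$i)), 0)"
      by (rule tangent_vector_singular[OF v u0 x0 z0])
    then show "\<exists>y::real^'n. v j = ((\<chi> i. vderiv z u0 * of_real (y$i)), 0)" ..
  qed
  then obtain Y where "\<forall>j. v j = ((\<chi> i. vderiv z u0 * of_real (Y j $ i)), 0)"
    by (rule choice[THEN exE])
  then have "(\<chi> i j. fst (v j) $ i) = (\<chi> i j. vderiv z u0 * of_real ((\<chi> i j. Y j $ i) $ i $ j))"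
    by (simp add: vec_eq_iff)
  then have "det (\<chi> i j. fst (v j) $ i) = vderiv z u0 ^ CARD('n) * of_real (det (\<chi> i j. Y j $ i))"
    by (simp only: det_scaled_of_real)
  then have "Omega f ((\<chi> i. z u0 * complex_of_real (x0 $ i)), \<zeta> u0) v
      = of_real (det (\<chi> i j. Y j $ i)) * (vderiv z u0 ^ CARD('n) / poly (pderiv f) (\<zeta> u0))"
    using pderiv_nonzero_where_z_zero[OF z0] by (simp add: Omega_def)
  then show ?thesis by (rule that)
qed

lemma Omega_singular_witness:
  fixes x0 :: "real^'n"
  assumes u0: "u0 \<in> {0..pi}" and x0: "x0 \<in> sphere 0 1" and z0: "z u0 = 0"
  obtains v where "\<And>j. v j \<in> tangent_vectors (Lambda z \<zeta> :: ((complex^'n) \<times> complex) set)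
      ((\<chi> i. z u0 * complex_of_real (x0 $ i)), \<zeta> u0)"
    and "Omega f ((\<chi> i. z u0 * complex_of_real (x0 $ i)), \<zeta> u0) v
      = vderiv z u0 ^ CARD('n) / poly (pderiv f) (\<zeta> u0)"
proof
  define v where "v j = (((\<chi> i. vderiv z u0 * of_real (axis j 1 $ i)) :: complex^'n), (0::complex))" for j
  have "vderiv \<zeta> u0 = 0" by (rule vderiv_\<zeta>_zero_pi[OF z_zero_on_half_circle[OF u0 z0]])
  then show "v j \<in> tangent_vectors (Lambda z \<zeta>) ((\<chi> i. z u0 * complex_of_real (x0 $ i)), \<zeta> u0)" for j
    using tangent_along_circle[OF z_has_vector_derivative \<zeta>_has_vector_derivative
        axis_in_unit_sphere[of j], of u0] z0
    by (simp add: v_def)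
  have "(\<chi> i j. fst (v j) $ i) = (\<chi> i j. vderiv z u0 * of_real ((mat 1 :: real^'n^'n) $ i $ j))"
    by (simp add: vec_eq_iff v_def axis_def mat_def)
  then have "det (\<chi> i j. fst (v j) $ i) = vderiv z u0 ^ CARD('n)"
    by (simp only: det_scaled_of_real) simp
  then show "Omega f ((\<chi> i. z u0 * complex_of_real (x0 $ i)), \<zeta> u0) v
      = vderiv z u0 ^ CARD('n) / poly (pderiv f) (\<zeta> u0)"
    using pderiv_nonzero_where_z_zero[OF z0] by (simp add: Omega_def)
qed

section \<open>Positivity and isotropy\<close>

lemma positive_at_regular_point_iff:
  fixes x0 :: "real^'n"
  assumes u0: "u0 \<in> {0..pi}" and x0: "x0 \<in> sphere 0 1" and z0: "z u0 \<noteq> 0"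
  shows "(\<exists>v. (\<forall>j. v j \<in> tangent_vectors (Lambda z \<zeta> :: ((complex^'n) \<times> complex) set) ((\<chi> i. z u0 * complex_of_real (x0 $ i)), \<zeta> u0)) \<and> Re (Omega f ((\<chi> i. z u0 * complex_of_real (x0 $ i)), \<zeta> u0) v) \<noteq> 0)
    \<longleftrightarrow> Re (vderiv \<zeta> u0 * z u0 powi (int CARD('n) - 2) / 2) \<noteq> 0"
    (is "(\<exists>v. ?tangent v \<and> ?pos v) \<longleftrightarrow> Re ?K \<noteq> 0")
proof
  assume "\<exists>v. ?tangent v \<and> ?pos v"
  then obtain v where vt: "\<And>j. v j \<in> tangent_vectors (Lambda z \<zeta> :: ((complex^'n) \<times> complex) set) ((\<chi> i. z u0 * complex_of_real (x0 $ i)), \<zeta> u0)" and "?pos v" by blast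
  moreover obtain r where "Omega f ((\<chi> i. z u0 * complex_of_real (x0 $ i)), \<zeta> u0) v = of_real r * ?K"
    by (rule Omega_regular_real_multiple[OF u0 x0 z0 vt]) (rule that)
  ultimately show "Re ?K \<noteq> 0" by (auto simp only: Re_of_real_mult mult_zero_right)
next
  assume K: "Re ?K \<noteq> 0"
  obtain v r where "\<And>j. v j \<in> tangent_vectors (Lambda z \<zeta> :: ((complex^'n) \<times> complex) set) ((\<chi> i. z u0 * complex_of_real (x0 $ i)), \<zeta> u0)"
    and "r \<noteq> 0" and \<Omega>: "Omega f ((\<chi> i. z u0 * complex_of_real (x0 $ i)), \<zeta> u0) v = of_real r * ?K"
    by (rule Omega_regular_witness[OF u0 x0 z0]) (rule that)
  moreover have "?pos v" unfolding \<Omega> Re_of_real_mult using \<open>r \<noteq> 0\<close> K by simp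
  ultimately show "\<exists>v. ?tangent v \<and> ?pos v" by blast
qed

lemma positive_at_singular_point_iff:
  fixes x0 :: "real^'n"
  assumes u0: "u0 \<in> {0..pi}" and x0: "x0 \<in> sphere 0 1" and z0: "z u0 = 0"
  shows "(\<exists>v. (\<forall>j. v j \<in> tangent_vectors (Lambda z \<zeta> :: ((complex^'n) \<times> complex) set) ((\<chi> i. z u0 * complex_of_real (x0 $ i)), \<zeta> u0)) \<and> Re (Omega f ((\<chi> i. z u0 * complex_of_real (x0 $ i)), \<zeta> u0) v) \<noteq> 0)
    \<longleftrightarrow> Re (vderiv z u0 ^ CARD('n) / poly (pderiv f) (\<zeta> u0)) \<noteq> 0"
    (is "(\<exists>v. ?tangent v \<and> ?pos v) \<longleftrightarrow> Re ?K \<noteq> 0")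
proof
  assume "\<exists>v. ?tangent v \<and> ?pos v"
  then obtain v where vt: "\<And>j. v j \<in> tangent_vectors (Lambda z \<zeta> :: ((complex^'n) \<times> complex) set) ((\<chi> i. z u0 * complex_of_real (x0 $ i)), \<zeta> u0)" and "?pos v" by blast
  moreover obtain r where "Omega f ((\<chi> i. z u0 * complex_of_real (x0 $ i)), \<zeta> u0) v = of_real r * ?K"
    by (rule Omega_singular_real_multiple[OF u0 x0 z0 vt]) (rule that)
  ultimately show "Re ?K \<noteq> 0" by (auto simp only: Re_of_real_mult mult_zero_right)
next
  assume "Re ?K \<noteq> 0"
  moreover obtain v where "\<And>j. v j \<in> tangent_vectors (Lambda z \<zeta> :: ((complex^'n) \<times> complex) set) ((\<chi> i. z u0 * complex_of_real (x0 $ i)), \<zeta> u0)" and "Omega f ((\<chi> i. z u0 * complex_of_real (x0 $ i)), \<zeta> u0) v = ?K"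
    by (rule Omega_singular_witness[OF u0 x0 z0]) (rule that)
  ultimately show "\<exists>v. ?tangent v \<and> ?pos v" by (auto intro!: exI[of _ v])
qed

lemma positive_at_Lambda_point_iff:
  fixes x0 :: "real^'n"
  assumes u0: "u0 \<in> {0..pi}" and x0: "x0 \<in> sphere 0 1"
  shows "(\<exists>v. (\<forall>j. v j \<in> tangent_vectors (Lambda z \<zeta> :: ((complex^'n) \<times> complex) set) ((\<chi> i. z u0 * complex_of_real (x0 $ i)), \<zeta> u0)) \<and> Re (Omega f ((\<chi> i. z u0 * complex_of_real (x0 $ i)), \<zeta> u0) v) \<noteq> 0)
    \<longleftrightarrow> (if z u0 = 0 then Re (vderiv z u0 ^ CARD('n) / poly (pderiv f) (\<zeta> u0)) \<noteq> 0
         else Re (vderiv \<zeta> u0 * z u0 powi (int CARD('n) - 2) / 2) \<noteq> 0)"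
proof (cases "z u0 = 0")
  case True
  show ?thesis unfolding if_P[OF True] by (rule positive_at_singular_point_iff[OF u0 x0 True])
next
  case False
  show ?thesis unfolding if_not_P[OF False] by (rule positive_at_regular_point_iff[OF u0 x0 False])
qed

lemma positive_Lambda_iff_half_circle:
  "positive f (Lambda z \<zeta> :: ((complex^'n) \<times> complex) set) \<longleftrightarrow>
    (\<forall>u\<in>{0..pi}. if z u = 0 then Re (vderiv z u ^ CARD('n) / poly (pderiv f) (\<zeta> u)) \<noteq> 0
       else Re (vderiv \<zeta> u * z u powi (int CARD('n) - 2) / 2) \<noteq> 0)"
proof
  assume pos: "positive f (Lambda z \<zeta> :: ((complex^'n) \<times> complex) set)"
  show "\<forall>u\<in>{0..pi}. if z u = 0 then Re (vderiv z u ^ CARD('n) / poly (pderiv f) (\<zeta> u)) \<noteq> 0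
       else Re (vderiv \<zeta> u * z u powi (int CARD('n) - 2) / 2) \<noteq> 0"
  proof
    fix u :: real
    assume u: "u \<in> {0..pi}"
    define x :: "real^'n" where "x = axis undefined 1"
    have x: "x \<in> sphere 0 1" unfolding x_def by (rule axis_in_unit_sphere)
    have "\<exists>v. (\<forall>j. v j \<in> tangent_vectors (Lambda z \<zeta> :: ((complex^'n) \<times> complex) set)
        ((\<chi> i. z u * complex_of_real (x $ i)), \<zeta> u))
      \<and> Re (Omega f ((\<chi> i. z u * complex_of_real (x $ i)), \<zeta> u) v) \<noteq> 0"
      using pos Lambda_memI[OF x, of z u \<zeta>] unfolding positive_def by blast
    then show "if z u = 0 then Re (vderiv z u ^ CARD('n) / poly (pderiv f) (\<zeta> u)) \<noteq> 0
       else Re (vderiv \<zeta> u * z u powi (int CARD('n) - 2) / 2) \<noteq> 0"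
      unfolding positive_at_Lambda_point_iff[OF u x] .
  qed
next
  assume cond: "\<forall>u\<in>{0..pi}. if z u = 0 then Re (vderiv z u ^ CARD('n) / poly (pderiv f) (\<zeta> u)) \<noteq> 0
       else Re (vderiv \<zeta> u * z u powi (int CARD('n) - 2) / 2) \<noteq> 0"
  show "positive f (Lambda z \<zeta> :: ((complex^'n) \<times> complex) set)"
    unfolding positive_def
  proof
    fix p :: "(complex^'n) \<times> complex"
    assume "p \<in> Lambda z \<zeta>"
    then obtain u x where "u \<in> {0..pi}" "x \<in> sphere 0 1" "p = ((\<chi> i. z u * complex_of_real (x $ i)), \<zeta> u)"
      by (rule Lambda_half_circle)
    with cond show "\<exists>v. (\<forall>j. v j \<in> tangent_vectors (Lambda z \<zeta>) p) \<and> Re (Omega f p v) \<noteq> 0"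
      using positive_at_Lambda_point_iff by blast
  qed
qed

lemma Lambda_isotropic: "lagrangian_isotropic (Lambda z \<zeta> :: ((complex^'n) \<times> complex) set)"
  unfolding lagrangian_isotropic_def
proof (intro ballI)
  fix p v w
  assume "p \<in> (Lambda z \<zeta> :: ((complex^'n) \<times> complex) set)"
    and "v \<in> tangent_vectors (Lambda z \<zeta>) p" and "w \<in> tangent_vectors (Lambda z \<zeta>) p"
  then show "kahler_form v w = 0"
    by (metis Lambda_half_circle isotropic_at_Lambda_point)
qed

end

lemma regular_factor_on_half_circle:
  obtains u0 where "u0 \<in> {0..pi}" and "z u0 = 0 \<longleftrightarrow> z u = 0"
    and "Re (vderiv \<zeta> u * z u powi (int CARD('n) - 2) / 2) = 0
      \<longleftrightarrow> Re (vderiv \<zeta> u0 * z u0 powi (int CARD('n) - 2) / 2) = 0"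
proof -
  obtain u0 and \<sigma> :: real where u0: "u0 \<in> {0..pi}" "\<sigma> = 1 \<or> \<sigma> = -1"
    "z u = of_real \<sigma> * z u0" "vderiv \<zeta> u = of_real \<sigma> * vderiv \<zeta> u0"
    by (rule reduce_to_half_circle)
  have "vderiv \<zeta> u * z u powi (int CARD('n) - 2) / 2
      = of_real (\<sigma> * \<sigma> powi (int CARD('n) - 2)) * (vderiv \<zeta> u0 * z u0 powi (int CARD('n) - 2) / 2)"
    unfolding u0(3,4) by (simp add: power_int_mult_distrib)
  moreover have "\<sigma> * \<sigma> powi (int CARD('n) - 2) \<noteq> 0" using u0(2) by auto
  ultimately have "Re (vderiv \<zeta> u * z u powi (int CARD('n) - 2) / 2) = 0
      \<longleftrightarrow> Re (vderiv \<zeta> u0 * z u0 powi (int CARD('n) - 2) / 2) = 0"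
    by (simp only: Re_of_real_mult mult_eq_0_iff) blast
  moreover have "z u0 = 0 \<longleftrightarrow> z u = 0" using u0(2,3) by auto
  ultimately show ?thesis using that u0(1) by blast
qed

lemma half_circle_condition_iff:
  "(\<forall>u\<in>{0..pi}. if z u = 0 then Re (vderiv z u ^ CARD('n) / poly (pderiv f) (\<zeta> u)) \<noteq> 0
       else Re (vderiv \<zeta> u * z u powi (int CARD('n) - 2) / 2) \<noteq> 0)
    \<longleftrightarrow> (\<forall>u. (\<forall>k::int. u \<noteq> pi * of_int k) \<longrightarrow> Re (vderiv \<zeta> u * z u powi (int CARD('n) - 2) / 2) \<noteq> 0)
      \<and> (\<forall>u\<in>{0, pi}. Re (vderiv z u ^ CARD('n) / poly (pderiv f) (\<zeta> u)) \<noteq> 0)"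
  (is "(\<forall>u\<in>{0..pi}. if z u = 0 then ?B u \<noteq> 0 else ?A u \<noteq> 0) \<longleftrightarrow> ?rhs")
proof
  assume cond: "\<forall>u\<in>{0..pi}. if z u = 0 then ?B u \<noteq> 0 else ?A u \<noteq> 0"
  have "?A u \<noteq> 0" if "\<forall>k::int. u \<noteq> pi * of_int k" for u
  proof -
    obtain u0 where "u0 \<in> {0..pi}" "z u0 = 0 \<longleftrightarrow> z u = 0" "?A u = 0 \<longleftrightarrow> ?A u0 = 0"
      by (rule regular_factor_on_half_circle)
    then show ?thesis using cond z_nonzero[OF that] by fastforce
  qed
  moreover have "?B u \<noteq> 0" if "u \<in> {0, pi}" for u
    using cond that z_zero z_pi by auto
  ultimately show ?rhs by blast
next
  assume rhs: ?rhs
  show "\<forall>u\<in>{0..pi}. if z u = 0 then ?B u \<noteq> 0 else ?A u \<noteq> 0"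
  proof
    fix u
    assume u: "u \<in> {0..pi}"
    show "if z u = 0 then ?B u \<noteq> 0 else ?A u \<noteq> 0"
    proof (cases "z u = 0")
      case True
      show ?thesis unfolding if_P[OF True]
        using conjunct2[OF rhs] z_zero_on_half_circle[OF u True] by (rule bspec)
    next
      case False
      have "\<forall>k::int. u \<noteq> pi * of_int k" using z_eq_0_iff[of u] False by blast
      then show ?thesis unfolding if_not_P[OF False] by (rule mp[OF spec[OF conjunct1[OF rhs]]])
    qed
  qed
qed

end

theorem lemma3p11:
  fixes f :: "complex poly" and z \<zeta> :: "real \<Rightarrow> complex"
  assumes "simple_zeros f"
    and "symmetric_circle f z \<zeta>"
  shows "positive_lagrangian f (Lambda z \<zeta> :: ((complex^'n) \<times> complex) set) \<longleftrightarrow>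
    ((\<forall>u. (\<forall>k::int. u \<noteq> pi * of_int k) \<longrightarrow>
        vderiv \<zeta> u * (z u) powi (int CARD('n) - 2) / 2 \<notin> range (\<lambda>r. \<i> * complex_of_real r)) \<and>
     (\<forall>u\<in>{0, pi}.
        (vderiv z u) ^ CARD('n) / poly (pderiv f) (\<zeta> u) \<notin> range (\<lambda>r. \<i> * complex_of_real r)))"
proof -
  have "positive_lagrangian f (Lambda z \<zeta> :: ((complex^'n) \<times> complex) set)
      \<longleftrightarrow> positive f (Lambda z \<zeta> :: ((complex^'n) \<times> complex) set)"
    using Lambda_isotropic[OF assms(2,1)] unfolding positive_lagrangian_def by blast
  also have "\<dots> \<longleftrightarrow> (\<forall>u\<in>{0..pi}. if z u = 0 then Re (vderiv z u ^ CARD('n) / poly (pderiv f) (\<zeta> u)) \<noteq> 0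
       else Re (vderiv \<zeta> u * z u powi (int CARD('n) - 2) / 2) \<noteq> 0)"
    by (rule positive_Lambda_iff_half_circle[OF assms(2,1)])
  also have "\<dots> \<longleftrightarrow> (\<forall>u. (\<forall>k::int. u \<noteq> pi * of_int k) \<longrightarrow> Re (vderiv \<zeta> u * z u powi (int CARD('n) - 2) / 2) \<noteq> 0)
      \<and> (\<forall>u\<in>{0, pi}. Re (vderiv z u ^ CARD('n) / poly (pderiv f) (\<zeta> u)) \<noteq> 0)"
    by (rule half_circle_condition_iff[OF assms(2)])
  finally show ?thesis by (simp only: notin_imaginary_axis_iff)
qed

end
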